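(* In the outer-domain setup, let $T>0$ and let $w\in C^{2,1}_{x,t}(U_T)\cap C(\overline{U_T})$ be bounded on $\overline{U_T}$ and satisfy $w(x,0)\le0$ in $U$ and $\mathcal Lw\le0$ in $U_T$. Then $\limsup_{r\to\infty}\sup_{\mathcal S_r\times[0,T]}w\le0$.
   Context: Setup. Fix $n\ge2$. For $i=1,2$: $g_i(s)=a^{(i)}_0+\sum_{j=1}^{N_i}a^{(i)}_js^{\alpha^{(i)}_j}$ ($s\ge0$), $a^{(i)}_0>0$, $a^{(i)}_j\ge0$, real $0<\alpha^{(i)}_1<\dots$; $G_i(u)=g_i(|u|)u$ ($u\in\mathbb R$). $f_1,f_2\in C([0,1])\cap C^1((0,1))$, $f_1(0)=0=f_2(1)$, $f_1'>0>f_2'$ on $(0,1)$; $p_c'\in C^1((0,1))$, $p_c'>0$; $F_i=1/(p_c'f_i)$. Fix $r_0>0$, $c_1,c_2$ with $c_1^2+c_2^2>0$, $s_0\in(0,1)$, and let $\hat S$ be a $C^1$ solution on $[r_0,\infty)$ of $\hat S'=G_2(c_2r^{1-n})F_2(\hat S)-G_1(c_1r^{1-n})F_1(\hat S)$, $\hat S(r_0)=s_0$, with $0<\underline s\le\hat S(r)\le\bar s<1$ for all $r\ge r_0$. For $|x|\ge r_0$: $S_*(x)=\hat S(|x|)$, $u_i^*(x)=c_i|x|^{-n}x$. For $u\in\mathbb R^n$: $\mathbf G_i(u)=g_i(|u|)u$, Jacobian $\mathbf G_i'(u)=g_i(|u|)I_n+g_i'(|u|)uu^T/|u|$ ($=g_i(0)I_n$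 at $u=0$). $B=F_1(S_* )\mathbf G_1'(u_1^* )+F_2(S_* )\mathbf G_2'(u_2^* )$, $A=B^{-1}$, $b=F_2'(S_* )\mathbf G_2(u_2^* )-F_1'(S_* )\mathbf G_1(u_1^* )$. $\mathcal Lw=\partial_tw-\nabla\cdot(A\nabla w)-b\cdot(A\nabla w)$. Outer domain: $U=\mathbb R^n\setminus\overline{B_{r_0}}$, $U_T=U\times(0,T]$, $\overline{U_T}=\overline U\times[0,T]$, $\mathcal S_r=\{|x|=r\}$. $C^{2,1}_{x,t}$: continuous with continuous $x$-derivatives up to order 2 and $t$-derivative of order 1. *)

theory Defs
  imports "HOL-Analysis.Analysis"
begin

definition gfun :: "nat \<Rightarrow> (nat \<Rightarrow> real) \<Rightarrow> (nat \<Rightarrow> real) \<Rightarrow> real \<Rightarrow> real" where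
  "gfun N a \<alpha> s = a 0 + (\<Sum>j=1..N. a j * s powr \<alpha> j)"

definition g_admissible :: "nat \<Rightarrow> (nat \<Rightarrow> real) \<Rightarrow> (nat \<Rightarrow> real) \<Rightarrow> bool" where
  "g_admissible N a \<alpha> \<longleftrightarrow> a 0 > 0 \<and> (\<forall>j\<in>{1..N}. a j \<ge> 0) \<and>
     (\<forall>j\<in>{1..N}. 0 < \<alpha> j) \<and> (\<forall>j. 1 \<le> j \<longrightarrow> j < N \<longrightarrow> \<alpha> j < \<alpha> (Suc j))"

definition Gsc :: "(real \<Rightarrow> real) \<Rightarrow> real \<Rightarrow> real" where
  "Gsc g u = g \<bar>u\<bar> * u"

definition Gvec :: "(real \<Rightarrow> real) \<Rightarrow> real^'n \<Rightarrow> real^'n" where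
  "Gvec g u = g (norm u) *\<^sub>R u"

definition GJac :: "(real \<Rightarrow> real) \<Rightarrow> real^'n \<Rightarrow> real^'n^'n" where
  "GJac g u = (if u = 0 then g 0 *\<^sub>R mat 1
      else g (norm u) *\<^sub>R mat 1 + (deriv g (norm u) / norm u) *\<^sub>R (\<chi> i j. u $ i * u $ j))"

definition Ffun :: "(real \<Rightarrow> real) \<Rightarrow> (real \<Rightarrow> real) \<Rightarrow> real \<Rightarrow> real" where
  "Ffun pcd f s = 1 / (pcd s * f s)"

definition ustar :: "real \<Rightarrow> real^'n \<Rightarrow> real^'n" where
  "ustar c x = (c * norm x powr (- real CARD('n))) *\<^sub>R x"

definition Bmat :: "(real \<Rightarrow> real) \<Rightarrow> (real \<Rightarrow> real) \<Rightarrow> (real \<Rightarrow> real) \<Rightarrow> (real \<Rightarrow> real)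
   \<Rightarrow> real \<Rightarrow> real \<Rightarrow> (real \<Rightarrow> real) \<Rightarrow> real^'n \<Rightarrow> real^'n^'n" where
  "Bmat F1 F2 g1 g2 c1 c2 Shat x =
     F1 (Shat (norm x)) *\<^sub>R GJac g1 (ustar c1 x) + F2 (Shat (norm x)) *\<^sub>R GJac g2 (ustar c2 x)"

definition Amat :: "(real \<Rightarrow> real) \<Rightarrow> (real \<Rightarrow> real) \<Rightarrow> (real \<Rightarrow> real) \<Rightarrow> (real \<Rightarrow> real)
   \<Rightarrow> real \<Rightarrow> real \<Rightarrow> (real \<Rightarrow> real) \<Rightarrow> real^'n \<Rightarrow> real^'n^'n" where
  "Amat F1 F2 g1 g2 c1 c2 Shat x = matrix_inv (Bmat F1 F2 g1 g2 c1 c2 Shat x)"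

definition bvec :: "(real \<Rightarrow> real) \<Rightarrow> (real \<Rightarrow> real) \<Rightarrow> (real \<Rightarrow> real) \<Rightarrow> (real \<Rightarrow> real)
   \<Rightarrow> real \<Rightarrow> real \<Rightarrow> (real \<Rightarrow> real) \<Rightarrow> real^'n \<Rightarrow> real^'n" where
  "bvec F1 F2 g1 g2 c1 c2 Shat x =
     deriv F2 (Shat (norm x)) *\<^sub>R Gvec g2 (ustar c2 x) - deriv F1 (Shat (norm x)) *\<^sub>R Gvec g1 (ustar c1 x)"

definition pdx :: "'n \<Rightarrow> (real^'n \<Rightarrow> real) \<Rightarrow> real^'n \<Rightarrow> real" where
  "pdx i h x = deriv (\<lambda>s. h (x + s *\<^sub>R axis i 1)) 0"

definition divg :: "(real^'n \<Rightarrow> real^'n) \<Rightarrow> real^'n \<Rightarrow> real" where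
  "divg V x = (\<Sum>i\<in>UNIV. pdx i (\<lambda>y. V y $ i) x)"

definition Lop :: "(real^'n \<Rightarrow> real^'n^'n) \<Rightarrow> (real^'n \<Rightarrow> real^'n)
   \<Rightarrow> (real^'n \<Rightarrow> real \<Rightarrow> real) \<Rightarrow> (real^'n \<Rightarrow> real \<Rightarrow> real^'n) \<Rightarrow> real^'n \<Rightarrow> real \<Rightarrow> real" where
  "Lop A b wt Dw x t = wt x t - divg (\<lambda>y. A y *v Dw y t) x - b x \<bullet> (A x *v Dw x t)"

end

theory Submission
  imports Defs "HOL-Real_Asymp.Real_Asymp"
begin

text \<open>A Phragmen--Lindelof argument. Let \<open>m(|x|)\<close> be the eigenvalue of \<open>B(x)\<close> in the direction
  of \<open>x\<close>; it lies between positive constants, so \<open>\<Lambda>(r) = \<integral> m\<close> over \<open>[r0, r]\<close> grows linearly.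
  The barrier \<open>\<Psi>\<^sub>R(x, t) = M exp (K t - \<Lambda>(|x|)) + M (\<Lambda>(|x|) + C t) / \<Lambda>(R)\<close> dominates \<open>w\<close> on both
  spheres of the annulus \<open>r0 \<le> |x| \<le> R\<close> and at \<open>t = 0\<close>. At an interior maximum of \<open>w - \<Psi>\<^sub>R\<close> one
  finds \<open>L w > 0\<close>: \<open>A\<close> maps \<open>\<nabla>\<Psi>\<^sub>R\<close> to a radial field with explicit divergence, and the rest of
  \<open>div (A \<nabla>w)\<close> is the trace of \<open>A\<close> against a negative semidefinite Hessian. Hence \<open>w \<le> \<Psi>\<^sub>R\<close>, and
  letting \<open>R \<rightarrow> \<infinity>\<close> gives \<open>w(x, t) \<le> M exp (K T - m_lo (|x| - r0))\<close>, which tends to \<open>0\<close>.\<close>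

section \<open>Linear algebra\<close>

lemma trace_orthogonal_conj:
  fixes Q H :: "real^'n^'n"
  assumes "orthogonal_matrix Q"
  shows "(\<Sum>i\<in>UNIV. (Q *v axis i 1) \<bullet> (H *v (Q *v axis i 1))) = trace H"
proof -
  have QQ: "Q ** transpose Q = mat 1" using assms unfolding orthogonal_matrix_def by simp
  have col: "Q *v axis i 1 = (\<chi> j. Q$j$i)" for i
    by (simp add: vec_eq_iff matrix_vector_mult_def axis_def if_distrib cong: if_cong)
  have "(\<Sum>i\<in>UNIV. (Q *v axis i 1) \<bullet> (H *v (Q *v axis i 1)))
      = (\<Sum>i\<in>UNIV. \<Sum>j\<in>UNIV. \<Sum>l\<in>UNIV. Q$j$i * (H$j$l * Q$l$i))"
    unfolding col by (simp add: inner_vec_def matrix_vector_mult_def sum_distrib_left)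
  also have "\<dots> = (\<Sum>j\<in>UNIV. \<Sum>l\<in>UNIV. \<Sum>i\<in>UNIV. Q$j$i * (H$j$l * Q$l$i))"
    by (subst sum.swap) (rule sum.cong[OF refl], rule sum.swap)
  also have "\<dots> = (\<Sum>j\<in>UNIV. \<Sum>l\<in>UNIV. H$j$l * (Q ** transpose Q)$j$l)"
    by (simp add: matrix_matrix_mult_def transpose_def sum_distrib_left mult_ac)
  also have "\<dots> = trace H"
    by (simp add: QQ trace_def mat_def if_distrib cong: if_cong)
  finally show ?thesis .
qed

lemma trace_le_quadratic_form:
  fixes H :: "real^'n^'n"
  assumes "norm y = 1" and nsd: "\<And>h. h \<bullet> (H *v h) \<le> 0"
  shows "trace H \<le> y \<bullet> (H *v y)"
proof -
  obtain k :: 'n where True by simp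
  obtain Q where Q: "orthogonal_matrix Q" "Q *v axis k 1 = y"
    using orthogonal_matrix_exists_basis[OF assms(1)] by metis
  have "trace H = (\<Sum>i\<in>UNIV. (Q *v axis i 1) \<bullet> (H *v (Q *v axis i 1)))"
    using trace_orthogonal_conj[OF Q(1)] by simp
  also have "\<dots> = y \<bullet> (H *v y) + (\<Sum>i\<in>UNIV-{k}. (Q *v axis i 1) \<bullet> (H *v (Q *v axis i 1)))"
    using Q(2) by (simp add: sum.remove[of _ k])
  also have "\<dots> \<le> y \<bullet> (H *v y)"
    by (simp add: sum_nonpos nsd)
  finally show ?thesis .
qed

text \<open>For \<open>y = 0\<close> the division by zero makes this the zero matrix.\<close>
definition proj_matrix :: "real^'n \<Rightarrow> real^'n^'n" where
  "proj_matrix y = (\<chi> i j. y$i * y$j / (norm y)\<^sup>2)"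

lemma norm_square_eq_sum: "(norm (y::real^'n))\<^sup>2 = (\<Sum>k\<in>UNIV. y$k * y$k)"
  by (simp add: power2_norm_eq_inner inner_vec_def)

lemma proj_matrix_idem:
  fixes y :: "real^'n"
  assumes "y \<noteq> 0"
  shows "proj_matrix y ** proj_matrix y = proj_matrix y"
proof -
  have "(\<Sum>k\<in>UNIV. y$i * y$k / (norm y)\<^sup>2 * (y$k * y$j / (norm y)\<^sup>2))
      = (y$i * y$j / ((norm y)\<^sup>2 * (norm y)\<^sup>2)) * (\<Sum>k\<in>UNIV. y$k * y$k)" for i j
    by (simp add: sum_distrib_left sum_divide_distrib field_simps mult_ac)
  also have "\<dots> i j = y$i * y$j / (norm y)\<^sup>2" for i j
    using assms by (simp add: field_simps power2_eq_square flip: norm_square_eq_sum)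
  finally show ?thesis by (simp add: proj_matrix_def matrix_matrix_mult_def vec_eq_iff)
qed

lemma proj_matrix_mult_self:
  fixes y :: "real^'n"
  assumes "y \<noteq> 0"
  shows "proj_matrix y *v y = y"
proof -
  have "(\<Sum>k\<in>UNIV. y$i * y$k / (norm y)\<^sup>2 * y$k) = (y$i / (norm y)\<^sup>2) * (\<Sum>k\<in>UNIV. y$k * y$k)" for i
    by (simp add: sum_distrib_left sum_divide_distrib field_simps mult_ac)
  also have "\<dots> i = y$i" for i
    using assms by (simp flip: norm_square_eq_sum)
  finally show ?thesis by (simp add: proj_matrix_def matrix_vector_mult_def vec_eq_iff)
qed

lemma continuous_on_proj_matrix: "continuous_on (-{0}) (proj_matrix :: real^'n \<Rightarrow> real^'n^'n)"
  unfolding proj_matrix_def by (intro continuous_intros) auto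

lemma trace_proj_matrix_mult:
  fixes y :: "real^'n" and H :: "real^'n^'n"
  shows "trace (proj_matrix y ** H) = (y /\<^sub>R norm y) \<bullet> (H *v (y /\<^sub>R norm y))"
proof -
  have "trace (proj_matrix y ** H) = (\<Sum>i\<in>UNIV. \<Sum>j\<in>UNIV. y$i * y$j / (norm y)\<^sup>2 * H$j$i)"
    by (simp add: trace_def proj_matrix_def matrix_matrix_mult_def)
  also have "\<dots> = (\<Sum>j\<in>UNIV. \<Sum>i\<in>UNIV. y$j * y$i / (norm y)\<^sup>2 * H$j$i)"
    by (subst sum.swap) (simp add: mult_ac)
  also have "\<dots> = (y /\<^sub>R norm y) \<bullet> (H *v (y /\<^sub>R norm y))"
    by (simp add: inner_vec_def matrix_vector_mult_def sum_distrib_left power2_eq_square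
        field_simps mult_ac)
  finally show ?thesis .
qed

lemma matrix_add_rdistrib:
  fixes A B C :: "real^'n^'n"
  shows "(A + B) ** C = A ** C + B ** C"
  by (simp add: matrix_matrix_mult_def vec_eq_iff sum.distrib distrib_right)

lemma trace_scaleR: "trace (k *\<^sub>R (A :: real^'n^'n)) = k * trace A"
  by (simp add: trace_def sum_distrib_left)

text \<open>Since \<open>a I + \<kappa> P\<close> has eigenvalues \<open>a\<close> and \<open>a + \<kappa>\<close>, the trace of its product with a negative
  semidefinite \<open>H\<close> is a nonnegative combination of \<open>trace H\<close> and a diagonal entry of \<open>H\<close>.\<close>
lemma trace_id_plus_proj_mult_nonpos:
  fixes H :: "real^'n^'n" and y :: "real^'n"
  assumes "y \<noteq> 0" and "0 \<le> a" and "0 \<le> a + \<kappa>" and nsd: "\<And>h. h \<bullet> (H *v h) \<le> 0"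
  shows "trace ((a *\<^sub>R mat 1 + \<kappa> *\<^sub>R proj_matrix y) ** H) \<le> 0"
proof -
  define q where "q = (y /\<^sub>R norm y) \<bullet> (H *v (y /\<^sub>R norm y))"
  have "trace H \<le> q"
    unfolding q_def by (rule trace_le_quadratic_form) (use assms in \<open>simp_all add: nsd\<close>)
  have "trace ((a *\<^sub>R mat 1 + \<kappa> *\<^sub>R proj_matrix y) ** H) = a * trace H + \<kappa> * q"
    by (simp add: matrix_add_rdistrib trace_add trace_scaleR trace_proj_matrix_mult q_def
        flip: scalar_matrix_assoc)
  also have "\<dots> \<le> (a + \<kappa>) * q"
    using \<open>trace H \<le> q\<close> \<open>0 \<le> a\<close> by (simp add: distrib_right mult_left_mono)
  also have "\<dots> \<le> 0"
    using assms(3) nsd[of "y /\<^sub>R norm y"] by (simp add: q_def mult_nonneg_nonpos)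
  finally show ?thesis .
qed

lemma matrix_inv_unique:
  fixes B C :: "real^'n^'n"
  assumes "B ** C = mat 1" "C ** B = mat 1"
  shows "matrix_inv B = C"
proof -
  have inv: "B ** matrix_inv B = mat 1 \<and> matrix_inv B ** B = mat 1"
    unfolding matrix_inv_def by (rule someI[of _ C]) (use assms in simp)
  have "matrix_inv B = matrix_inv B ** (B ** C)" by (simp add: assms)
  also have "\<dots> = C" by (simp add: matrix_mul_assoc inv)
  finally show ?thesis .
qed

lemma matrix_inv_id_plus_proj:
  fixes y :: "real^'n"
  assumes "y \<noteq> 0" and "p \<noteq> 0" and "p + q \<noteq> 0"
  shows "matrix_inv (p *\<^sub>R mat 1 + q *\<^sub>R proj_matrix y)
       = (1/p) *\<^sub>R mat 1 + (1/(p+q) - 1/p) *\<^sub>R proj_matrix y"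
proof (rule matrix_inv_unique)
  let ?P = "proj_matrix y"
  have mult: "(a *\<^sub>R mat 1 + b *\<^sub>R ?P) ** (a' *\<^sub>R mat 1 + b' *\<^sub>R ?P)
      = (a * a') *\<^sub>R mat 1 + (a * b' + b * a' + b * b') *\<^sub>R ?P" for a b a' b' :: real
    by (simp add: matrix_add_ldistrib matrix_add_rdistrib matrix_scalar_ac proj_matrix_idem[OF assms(1)]
        scaleR_add_left algebra_simps flip: scalar_matrix_assoc)
  define x where "x = 1/(p+q) - 1/p"
  have "(p+q) * x + q * (1/p) = 0"
    unfolding x_def using assms(2,3) by (simp add: right_diff_distrib) (simp add: field_simps)
  then have "p * x + q * (1/p) + q * x = 0" and "(1/p) * q + x * p + x * q = 0"
    by (simp_all add: algebra_simps)
  then show "(p *\<^sub>R mat 1 + q *\<^sub>R ?P) ** ((1/p) *\<^sub>R mat 1 + (1/(p+q) - 1/p) *\<^sub>R ?P) = mat 1"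
    and "((1/p) *\<^sub>R mat 1 + (1/(p+q) - 1/p) *\<^sub>R ?P) ** (p *\<^sub>R mat 1 + q *\<^sub>R ?P) = mat 1"
    unfolding mult x_def[symmetric] using assms(2) by simp_all
qed

section \<open>Calculus at a maximum\<close>

lemma has_real_derivative_nonneg_at_left_max:
  fixes f :: "real \<Rightarrow> real"
  assumes d: "(f has_real_derivative d) (at t within {a<..b})" and t: "a < t" "t \<le> b"
    and max: "\<forall>s\<in>{a<..<t}. f s \<le> f t"
  shows "0 \<le> d"
proof -
  have lim: "((\<lambda>y. (f y - f t) / (y - t)) \<longlongrightarrow> d) (at t within {a<..<t})"
    using d unfolding has_field_derivative_iff
    by (rule tendsto_within_subset) (use t in auto)
  have "at t within {a<..<t} = at_left t"
    by (rule at_within_nhd[of _ "{a<..}"]) (use t in auto)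
  moreover have "eventually (\<lambda>y. 0 \<le> (f y - f t) / (y - t)) (at t within {a<..<t})"
    unfolding eventually_at_filter using max
    by (intro always_eventually) (auto intro!: divide_nonpos_neg)
  ultimately show ?thesis
    using tendsto_lowerbound[OF lim] by simp
qed

lemma second_derivative_nonpos_at_max:
  fixes \<phi> \<phi>' :: "real \<Rightarrow> real"
  assumes "\<delta> > 0" and max: "\<forall>s\<in>{-\<delta><..<\<delta>}. \<phi> s \<le> \<phi> 0"
    and d1: "\<forall>s\<in>{-\<delta><..<\<delta>}. (\<phi> has_real_derivative \<phi>' s) (at s)"
    and "\<phi>' 0 = 0" and d2: "(\<phi>' has_real_derivative d) (at 0)"
  shows "d \<le> 0"
proof (rule ccontr)
  assume "\<not> d \<le> 0"
  have "((\<lambda>y. (\<phi>' y - \<phi>' 0) / (y - 0)) \<longlongrightarrow> d) (at_right 0)"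
    using d2 unfolding has_field_derivative_iff by (rule tendsto_mono[rotated]) (simp add: at_le)
  from order_tendstoD(1)[OF this] \<open>\<not> d \<le> 0\<close> \<open>\<phi>' 0 = 0\<close>
  have "eventually (\<lambda>y. 0 < \<phi>' y / y) (at_right 0)" by simp
  then obtain b where b: "b > 0" "\<And>y. 0 < y \<Longrightarrow> y < b \<Longrightarrow> 0 < \<phi>' y / y"
    unfolding eventually_at_right_field by auto
  define s where "s = min b \<delta> / 2"
  have s: "0 < s" "s < b" "s < \<delta>" using b \<open>\<delta> > 0\<close> unfolding s_def by auto
  obtain z where z: "0 < z" "z < s" "\<phi> s - \<phi> 0 = (s - 0) * \<phi>' z"
    using MVT2[OF s(1), of \<phi> \<phi>'] d1 s \<open>\<delta> > 0\<close> by force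
  have "0 < \<phi>' z" using b(2)[of z] z s by (simp add: zero_less_divide_iff)
  then have "0 < s * \<phi>' z" using s(1) by simp
  moreover have "\<phi> s \<le> \<phi> 0" using max s \<open>\<delta> > 0\<close> by simp
  ultimately show False using z(3) by simp
qed

lemma DERIV_mult_vanishing:
  fixes f g :: "real \<Rightarrow> real"
  assumes "isCont f a" and "g a = 0" and "(g has_real_derivative d) (at a)"
  shows "((\<lambda>s. f s * g s) has_real_derivative f a * d) (at a)"
proof -
  have "((\<lambda>y. f y * ((g y - g a) / (y - a))) \<longlongrightarrow> f a * d) (at a)"
    using assms(1,3) by (intro tendsto_mult) (simp_all add: continuous_at has_field_derivative_iff)
  then show ?thesis unfolding has_field_derivative_iff using assms(2) by simp
qed

lemma DERIV_along_line:
  fixes f :: "real^'n \<Rightarrow> real"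
  assumes "(f has_derivative Df) (at (x + s *\<^sub>R h))"
  shows "((\<lambda>u. f (x + u *\<^sub>R h)) has_real_derivative Df h) (at s)"
proof -
  have "((\<lambda>u. x + u *\<^sub>R h) has_derivative (\<lambda>u. u *\<^sub>R h)) (at s)"
    by (auto intro!: derivative_eq_intros)
  from has_derivative_compose[OF this, of f Df]
  have "((\<lambda>u. f (x + u *\<^sub>R h)) has_derivative (\<lambda>u. Df (u *\<^sub>R h))) (at s)"
    using assms by simp
  moreover have "(\<lambda>u. Df (u *\<^sub>R h)) = (\<lambda>u. Df h * u)"
    using has_derivative_linear[OF assms] by (simp add: linear_scale fun_eq_iff mult.commute)
  ultimately show ?thesis by (simp add: has_field_derivative_def)
qed

lemma DERIV_matrix_vector_vanishing:
  fixes A :: "real^'n \<Rightarrow> real^'n^'n" and z :: "real^'n \<Rightarrow> real^'n"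
  assumes cA: "isCont A x" and "z x = 0" and dz: "(z has_derivative Dz) (at x)"
  shows "((\<lambda>s. (A (x + s *\<^sub>R e) *v z (x + s *\<^sub>R e)) $ i) has_real_derivative (A x *v Dz e) $ i) (at 0)"
proof -
  have dzj: "((\<lambda>s. z (x + s *\<^sub>R e) $ j) has_real_derivative Dz e $ j) (at 0)" for j
  proof -
    have "((\<lambda>y. z y $ j) has_derivative (\<lambda>h. Dz h $ j)) (at (x + 0 *\<^sub>R e))"
      using bounded_linear.has_derivative[OF bounded_linear_vec_nth dz] by simp
    from DERIV_along_line[OF this] show ?thesis .
  qed
  have "isCont (\<lambda>s. x + s *\<^sub>R e) 0" by (intro continuous_intros)
  moreover have "isCont A ((\<lambda>s. x + s *\<^sub>R e) 0)" using cA by simp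
  ultimately have "isCont (\<lambda>s. A (x + s *\<^sub>R e)) 0" by (rule isCont_o2)
  then have cAj: "isCont (\<lambda>s. A (x + s *\<^sub>R e) $ i $ j) 0" for j
    by (intro continuous_intros)
  have "((\<lambda>s. \<Sum>j\<in>UNIV. A (x + s *\<^sub>R e) $ i $ j * z (x + s *\<^sub>R e) $ j) has_real_derivative
          (\<Sum>j\<in>UNIV. A (x + 0 *\<^sub>R e) $ i $ j * Dz e $ j)) (at 0)"
    by (rule DERIV_sum, rule DERIV_mult_vanishing[OF cAj]) (use \<open>z x = 0\<close> dzj in simp_all)
  then show ?thesis by (simp add: matrix_vector_mult_def)
qed

lemma has_derivative_norm_at:
  fixes x :: "real^'n"
  assumes "x \<noteq> 0"
  shows "(norm has_derivative (\<lambda>h. x \<bullet> h / norm x)) (at x)"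
  using has_derivative_norm[OF assms] by (simp add: sgn_div_norm inner_commute divide_inverse mult.commute)

lemma has_derivative_radial:
  fixes y :: "real^'n" and \<psi> :: "real \<Rightarrow> real"
  assumes "y \<noteq> 0" and "(\<psi> has_real_derivative d) (at (norm y))"
  shows "((\<lambda>y. \<psi> (norm y)) has_derivative (\<lambda>h. ((d / norm y) *\<^sub>R y) \<bullet> h)) (at y)"
proof -
  have "((\<lambda>y. \<psi> (norm y)) has_derivative (\<lambda>h. d * (y \<bullet> h / norm y))) (at y)"
    using has_derivative_compose[OF has_derivative_norm_at[OF assms(1)], of \<psi> "\<lambda>u. d * u"] assms(2)
    by (simp add: o_def has_field_derivative_def)
  then show ?thesis by (simp add: inner_scaleR_left)
qed

lemma differentiable_radial_field:
  fixes x :: "real^'n" and \<kappa> :: "real \<Rightarrow> real"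
  assumes "x \<noteq> 0" and "\<kappa> differentiable (at (norm x))"
  shows "(\<lambda>y. \<kappa> (norm y) *\<^sub>R y) differentiable (at x)"
proof -
  have "(\<kappa> \<circ> norm) differentiable (at x)"
    using differentiable_norm_at[OF assms(1)] assms(2) by (rule differentiable_chain_at)
  then show ?thesis by (intro differentiable_scaleR) (auto simp: o_def)
qed

lemma DERIV_radial_field_component:
  fixes x :: "real^'n" and \<phi> :: "real \<Rightarrow> real"
  assumes "x \<noteq> 0" and "(\<phi> has_real_derivative \<phi>') (at (norm x))"
  shows "((\<lambda>s. \<phi> (norm (x + s *\<^sub>R axis i 1)) * (x + s *\<^sub>R axis i 1) $ i) has_real_derivative
           \<phi>' * (x$i / norm x) * x$i + \<phi> (norm x)) (at 0)"
proof -
  have "((\<lambda>s. norm (x + s *\<^sub>R axis i 1)) has_real_derivative x$i / norm x) (at 0)"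
    using DERIV_along_line[of norm "\<lambda>h. x \<bullet> h / norm x" x 0 "axis i 1"] has_derivative_norm_at[OF assms(1)]
    by (simp add: inner_axis)
  moreover have "(\<phi> has_real_derivative \<phi>') (at (norm (x + 0 *\<^sub>R axis i 1)))"
    using assms(2) by simp
  ultimately have "((\<lambda>s. \<phi> (norm (x + s *\<^sub>R axis i 1))) has_real_derivative \<phi>' * (x$i / norm x)) (at 0)"
    by (rule DERIV_chain2[rotated])
  moreover have "((\<lambda>s. (x + s *\<^sub>R axis i 1) $ i) has_real_derivative 1) (at 0)"
    by (simp add: axis_def) (auto intro!: derivative_eq_intros)
  ultimately show ?thesis using DERIV_mult by fastforce
qed

lemma sum_radial_component_derivatives:
  fixes x :: "real^'n"
  assumes "x \<noteq> 0"
  shows "(\<Sum>i\<in>UNIV. \<phi>' * (x$i / norm x) * x$i) = \<phi>' * norm x"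
proof -
  have "(\<Sum>i\<in>UNIV. \<phi>' * (x$i / norm x) * x$i) = (\<phi>' / norm x) * (norm x)\<^sup>2"
    by (simp add: norm_square_eq_sum sum_distrib_left mult_ac)
  then show ?thesis using assms by (simp add: power2_eq_square)
qed

text \<open>Only the derivative of \<open>z\<close> enters the first term, so \<open>A\<close> need merely be continuous.\<close>
lemma divg_at_zero_plus_radial:
  fixes A :: "real^'n \<Rightarrow> real^'n^'n" and V z :: "real^'n \<Rightarrow> real^'n"
  assumes "open Om" "x \<in> Om" "x \<noteq> 0" and "isCont A x"
    and "z x = 0" and dz: "(z has_derivative Dz) (at x)"
    and V: "\<forall>y\<in>Om. V y = A y *v z y + \<phi> (norm y) *\<^sub>R y"
    and "(\<phi> has_real_derivative \<phi>') (at (norm x))"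
  shows "divg V x = trace (A x ** matrix Dz) + \<phi>' * norm x + real CARD('n) * \<phi> (norm x)"
proof -
  have pd: "pdx i (\<lambda>y. V y $ i) x = (A x ** matrix Dz)$i$i + (\<phi>' * (x$i / norm x) * x$i + \<phi> (norm x))"
    for i
  proof -
    have "open {s::real. x + s *\<^sub>R axis i 1 \<in> Om}"
      using open_vimage[OF \<open>open Om\<close>, of "\<lambda>s::real. x + s *\<^sub>R axis i 1"]
      by (simp add: vimage_def continuous_intros)
    then have "eventually (\<lambda>s. x + s *\<^sub>R axis i 1 \<in> Om) (nhds (0::real))"
      using eventually_nhds_in_open[of _ 0] \<open>x \<in> Om\<close> by fastforce
    then have ev: "eventually (\<lambda>s. V (x + s *\<^sub>R axis i 1) $ i =
        (A (x + s *\<^sub>R axis i 1) *v z (x + s *\<^sub>R axis i 1)) $ i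
        + \<phi> (norm (x + s *\<^sub>R axis i 1)) * (x + s *\<^sub>R axis i 1) $ i) (nhds 0)"
      by eventually_elim (simp add: V)
    have Dz_matrix: "matrix Dz *v h = Dz h" for h
      using matrix_works[of Dz] has_derivative_linear[OF dz] by (simp add: linear_matrix_vector_mul_eq)
    have "A x *v Dz (axis i 1) = (A x ** matrix Dz) *v axis i 1"
      by (simp add: Dz_matrix flip: matrix_vector_mul_assoc)
    then have entry: "(A x *v Dz (axis i 1)) $ i = (A x ** matrix Dz)$i$i"
      by (simp add: matrix_vector_mult_basis column_def)
    have "((\<lambda>s. (A (x + s *\<^sub>R axis i 1) *v z (x + s *\<^sub>R axis i 1)) $ i
        + \<phi> (norm (x + s *\<^sub>R axis i 1)) * (x + s *\<^sub>R axis i 1) $ i) has_real_derivative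
        (A x *v Dz (axis i 1)) $ i + (\<phi>' * (x$i / norm x) * x$i + \<phi> (norm x))) (at 0)"
      by (rule DERIV_add[OF DERIV_matrix_vector_vanishing[OF assms(4,5) dz]
          DERIV_radial_field_component[OF assms(3,8)]])
    then have "((\<lambda>s. V (x + s *\<^sub>R axis i 1) $ i) has_real_derivative
        (A x ** matrix Dz)$i$i + (\<phi>' * (x$i / norm x) * x$i + \<phi> (norm x))) (at 0)"
      unfolding entry DERIV_cong_ev[OF refl ev refl] .
    then show ?thesis unfolding pdx_def by (rule DERIV_imp_deriv)
  qed
  show ?thesis
    unfolding divg_def pd sum.distrib sum_radial_component_derivatives[OF assms(3)]
    by (simp add: trace_def)
qed

lemma hessian_nonpos_at_local_max:
  fixes v :: "real^'n \<Rightarrow> real" and z :: "real^'n \<Rightarrow> real^'n"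
  assumes "open Om" "x \<in> Om" and max: "\<forall>y\<in>Om. v y \<le> v x"
    and dv: "\<forall>y\<in>Om. (v has_derivative (\<lambda>h. z y \<bullet> h)) (at y)"
    and dz: "(z has_derivative Dz) (at x)"
  shows "z x = 0" and "h \<bullet> Dz h \<le> 0"
proof -
  have "(\<lambda>h. z x \<bullet> h) = (\<lambda>h. 0)"
    by (rule differential_zero_maxmin[OF assms(2,1) dv[rule_format, OF assms(2)]]) (use max in auto)
  then show "z x = 0" by (metis inner_eq_zero_iff)
  show "h \<bullet> Dz h \<le> 0"
  proof (cases "h = 0")
    case False
    obtain \<epsilon> where "\<epsilon> > 0" "ball x \<epsilon> \<subseteq> Om" using assms(1,2) open_contains_ball by blast
    define \<delta> where "\<delta> = \<epsilon> / norm h"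
    have "\<delta> > 0" using \<open>\<epsilon> > 0\<close> False unfolding \<delta>_def by simp
    have line: "x + s *\<^sub>R h \<in> Om" if "s \<in> {-\<delta><..<\<delta>}" for s
    proof -
      have "norm (s *\<^sub>R h) < \<epsilon>" using that False unfolding \<delta>_def by (auto simp: field_simps abs_less_iff)
      then show ?thesis using \<open>ball x \<epsilon> \<subseteq> Om\<close> by (auto simp: dist_norm)
    qed
    have "((\<lambda>y. z y \<bullet> h) has_derivative (\<lambda>k. Dz k \<bullet> h)) (at (x + 0 *\<^sub>R h))"
      using dz by (auto intro!: derivative_eq_intros)
    have "Dz h \<bullet> h \<le> 0"
    proof (rule second_derivative_nonpos_at_max[OF \<open>\<delta> > 0\<close>])
      show "\<forall>s\<in>{-\<delta><..<\<delta>}. v (x + s *\<^sub>R h) \<le> v (x + 0 *\<^sub>R h)"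
        using max line by simp
      show "\<forall>s\<in>{-\<delta><..<\<delta>}. ((\<lambda>s. v (x + s *\<^sub>R h)) has_real_derivative z (x + s *\<^sub>R h) \<bullet> h) (at s)"
        using dv line by (auto intro: DERIV_along_line)
      show "z (x + 0 *\<^sub>R h) \<bullet> h = 0" using \<open>z x = 0\<close> by simp
      show "((\<lambda>s. z (x + s *\<^sub>R h) \<bullet> h) has_real_derivative Dz h \<bullet> h) (at 0)"
        by (rule DERIV_along_line) fact
    qed
    then show ?thesis by (simp add: inner_commute)
  qed simp
qed

text \<open>At a space-time maximum of \<open>w - \<Psi>\<close>, if \<open>A\<close> maps \<open>\<nabla>\<Psi>\<close> to a radial field \<open>\<phi>(|y|) y\<close>, the
  divergence of \<open>A \<nabla>w\<close> is that of the radial field plus a nonpositive trace term.\<close>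
lemma Lop_ge_at_max:
  fixes A :: "real^'n \<Rightarrow> real^'n^'n" and b G :: "real^'n \<Rightarrow> real^'n"
    and w wt \<Psi> :: "real^'n \<Rightarrow> real \<Rightarrow> real" and Dw :: "real^'n \<Rightarrow> real \<Rightarrow> real^'n"
  assumes "open Om" "x \<in> Om" "x \<noteq> 0" and t: "0 < t" "t \<le> T"
    and max_x: "\<forall>y\<in>Om. w y t - \<Psi> y t \<le> w x t - \<Psi> x t"
    and max_t: "\<forall>s\<in>{0<..<t}. w x s - \<Psi> x s \<le> w x t - \<Psi> x t"
    and dwt: "((\<lambda>s. w x s) has_real_derivative wt x t) (at t within {0<..T})"
    and d\<Psi>t: "((\<lambda>s. \<Psi> x s) has_real_derivative \<Psi>t) (at t)"
    and dwx: "\<forall>y\<in>Om. ((\<lambda>y. w y t) has_derivative (\<lambda>h. Dw y t \<bullet> h)) (at y)"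
    and d\<Psi>x: "\<forall>y\<in>Om. ((\<lambda>y. \<Psi> y t) has_derivative (\<lambda>h. G y \<bullet> h)) (at y)"
    and dwxx: "((\<lambda>y. Dw y t) has_derivative D2) (at x)"
    and "G differentiable (at x)" and "isCont A x"
    and AG: "\<forall>y\<in>Om. A y *v G y = \<phi> (norm y) *\<^sub>R y"
    and d\<phi>: "(\<phi> has_real_derivative \<phi>') (at (norm x))"
    and trace_nonpos: "\<And>H. (\<forall>h. h \<bullet> (H *v h) \<le> 0) \<Longrightarrow> trace (A x ** H) \<le> 0"
  shows "\<Psi>t - (\<phi>' * norm x + real CARD('n) * \<phi> (norm x)) - b x \<bullet> (\<phi> (norm x) *\<^sub>R x)
      \<le> Lop A b wt Dw x t"
proof -
  have "0 \<le> wt x t - \<Psi>t"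
    using has_real_derivative_nonneg_at_left_max[OF DERIV_diff[OF dwt
          has_field_derivative_at_within[OF d\<Psi>t]] t] max_t by simp
  define z where "z y = Dw y t - G y" for y
  obtain DG where DG: "(G has_derivative DG) (at x)" using \<open>G differentiable (at x)\<close>
    unfolding differentiable_def by blast
  have dz: "(z has_derivative (\<lambda>h. D2 h - DG h)) (at x)"
    unfolding z_def by (rule has_derivative_diff[OF dwxx DG])
  have dv: "\<forall>y\<in>Om. ((\<lambda>y. w y t - \<Psi> y t) has_derivative (\<lambda>h. z y \<bullet> h)) (at y)"
    using dwx d\<Psi>x unfolding z_def by (auto intro: has_derivative_diff simp: inner_diff_left)
  note crit = hessian_nonpos_at_local_max[OF assms(1,2) max_x dv dz]
  let ?H = "matrix (\<lambda>h. D2 h - DG h)"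
  have "?H *v h = D2 h - DG h" for h
    using matrix_works has_derivative_linear[OF dz] by (simp add: linear_matrix_vector_mul_eq)
  then have "trace (A x ** ?H) \<le> 0"
    using crit(2) by (intro trace_nonpos) (simp add: inner_commute)
  moreover have "divg (\<lambda>y. A y *v Dw y t) x
      = trace (A x ** ?H) + \<phi>' * norm x + real CARD('n) * \<phi> (norm x)"
    by (rule divg_at_zero_plus_radial[OF assms(1-3) \<open>isCont A x\<close> crit(1) dz _ d\<phi>])
      (use AG in \<open>simp add: z_def matrix_vector_mult_diff_distrib\<close>)
  moreover have "Dw x t = G x" using crit(1) unfolding z_def by simp
  ultimately show ?thesis
    using \<open>0 \<le> wt x t - \<Psi>t\<close> AG assms(2) unfolding Lop_def by simp
qed

section \<open>Comparison with a radial barrier\<close>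

locale radial_coefficients =
  fixes A :: "real^'n \<Rightarrow> real^'n^'n" and b :: "real^'n \<Rightarrow> real^'n"
    and m :: "real \<Rightarrow> real" and m_lo m_hi \<beta> r0 :: real
  assumes r0_pos: "0 < r0"
    and m_cont: "continuous_on {r0..} m"
    and m_diff: "\<forall>r>r0. m differentiable (at r)"
    and m_lo_pos: "0 < m_lo" and m_bounds: "\<forall>r\<ge>r0. m_lo \<le> m r \<and> m r \<le> m_hi"
    and A_radial: "\<forall>y. r0 < norm y \<longrightarrow> A y *v y = (1 / m (norm y)) *\<^sub>R y"
    and A_cont: "\<forall>y. r0 < norm y \<longrightarrow> isCont A y"
    and A_trace: "\<forall>y H. r0 < norm y \<longrightarrow> (\<forall>h. h \<bullet> (H *v h) \<le> 0) \<longrightarrow> trace (A y ** H) \<le> 0"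
    and b_bound: "\<forall>y. r0 < norm y \<longrightarrow> norm (b y) \<le> \<beta>"
begin

definition Lam :: "real \<Rightarrow> real" where
  "Lam r = integral {r0..r} m"

lemma Lam_has_derivative:
  assumes "r0 < r"
  shows "(Lam has_real_derivative m r) (at r)"
proof -
  have "continuous_on {r0..r+1} m" by (rule continuous_on_subset[OF m_cont]) auto
  then have "(Lam has_vector_derivative m r) (at r within {r0..r+1})"
    unfolding Lam_def by (rule integral_has_vector_derivative) (use assms in auto)
  moreover have "at r within {r0..r+1} = at r" by (rule at_within_interior) (use assms in auto)
  ultimately show ?thesis by (simp add: has_real_derivative_iff_has_vector_derivative)
qed

lemma continuous_on_Lam: "continuous_on {r0..R} Lam"
  unfolding Lam_def
  by (intro indefinite_integral_continuous_1 integrable_continuous_real continuous_on_subset[OF m_cont]) auto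

lemma Lam_ge:
  assumes "r0 \<le> r"
  shows "m_lo * (r - r0) \<le> Lam r"
proof (cases "r = r0")
  case False
  then have "r0 < r" using assms by simp
  moreover have "\<forall>z. r0 < z \<and> z < r \<longrightarrow> Lam differentiable (at z)"
    using Lam_has_derivative real_differentiable_def by blast
  ultimately obtain l z where z: "r0 < z" "z < r" "(Lam has_real_derivative l) (at z)"
    "Lam r - Lam r0 = (r - r0) * l"
    using MVT[OF _ continuous_on_Lam] by blast
  then have "l = m z" using DERIV_unique Lam_has_derivative by blast
  then have "m_lo \<le> l" using m_bounds z by simp
  then show ?thesis using z(4) \<open>r0 < r\<close> by (simp add: Lam_def mult.commute mult_right_mono)
qed (simp add: Lam_def)

lemma Lam_nonneg: "r0 \<le> r \<Longrightarrow> 0 \<le> Lam r"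
  using Lam_ge[of r] m_lo_pos by (smt (verit) mult_nonneg_nonneg)

lemma Lam_pos: "r0 < r \<Longrightarrow> 0 < Lam r"
  using Lam_ge[of r] m_lo_pos by (smt (verit) mult_pos_pos)

definition K :: real where "K = m_hi + \<beta> + 1"

definition C :: real where "C = (real CARD('n) - 1) / r0 + \<beta> + 1"

text \<open>The barrier on the annulus \<open>r0 \<le> |y| \<le> R\<close>: the first term dominates \<open>w\<close> on the inner sphere and
  decays along \<open>\<Lambda>\<close>, the second dominates \<open>w\<close> on the outer sphere and vanishes as \<open>R \<rightarrow> \<infinity>\<close>.\<close>
definition barrier :: "real \<Rightarrow> real \<Rightarrow> real^'n \<Rightarrow> real \<Rightarrow> real" where
  "barrier M R y t = M * exp (K * t - Lam (norm y)) + M * (Lam (norm y) + C * t) / Lam R"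

lemma beta_nonneg: "0 \<le> \<beta>"
proof -
  have "r0 < norm ((r0 + 1) *\<^sub>R axis (undefined::'n) (1::real))" using r0_pos by simp
  then show ?thesis using b_bound by (blast intro: order_trans[OF norm_ge_zero])
qed

lemma K_pos: "0 < K" and C_pos: "0 < C"
proof -
  have "0 < m_hi" using m_bounds m_lo_pos by force
  moreover have "0 \<le> (real CARD('n) - 1) / r0" using r0_pos by simp
  ultimately show "0 < K" "0 < C" unfolding K_def C_def using beta_nonneg by simp_all
qed

lemma barrier_has_derivative_time:
  assumes "r0 < R"
  shows "((\<lambda>s. barrier M R y s) has_real_derivative
      K * M * exp (K * t - Lam (norm y)) + M * C / Lam R) (at t)"
  unfolding barrier_def using Lam_pos[OF assms]
  by (auto intro!: derivative_eq_intros simp: algebra_simps)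

text \<open>The radial derivative of the barrier is \<open>barrier_slope \<cdot> m\<close>.\<close>
definition barrier_slope :: "real \<Rightarrow> real \<Rightarrow> real \<Rightarrow> real \<Rightarrow> real" where
  "barrier_slope M R t \<rho> = M / Lam R - M * exp (K * t - Lam \<rho>)"

lemma barrier_slope_has_derivative:
  assumes "r0 < \<rho>"
  shows "(barrier_slope M R t has_real_derivative M * exp (K * t - Lam \<rho>) * m \<rho>) (at \<rho>)"
  unfolding barrier_slope_def using Lam_has_derivative[OF assms]
  by (auto intro!: derivative_eq_intros)

lemma barrier_has_derivative_space:
  assumes "r0 < R" and "r0 < norm y"
  shows "((\<lambda>y. barrier M R y t) has_derivative
      (\<lambda>h. ((barrier_slope M R t (norm y) * m (norm y) / norm y) *\<^sub>R y) \<bullet> h)) (at y)"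
proof -
  have "((\<lambda>\<rho>. M * exp (K * t - Lam \<rho>) + M * (Lam \<rho> + C * t) / Lam R) has_real_derivative
      barrier_slope M R t (norm y) * m (norm y)) (at (norm y))"
    unfolding barrier_slope_def using Lam_has_derivative[OF assms(2)] Lam_pos[OF assms(1)]
    by (auto intro!: derivative_eq_intros simp: algebra_simps)
  from has_derivative_radial[OF _ this] show ?thesis
    using assms(2) r0_pos unfolding barrier_def by force
qed

lemma barrier_residual_pos:
  fixes x :: "real^'n"
  assumes "0 < M" and R: "r0 < R" and x: "r0 < norm x"
  shows "0 < K * M * exp (K * t - Lam (norm x)) + M * C / Lam R
      - ((M * exp (K * t - Lam (norm x)) * m (norm x) * norm x - barrier_slope M R t (norm x))
          / (norm x)\<^sup>2 * norm x
        + real CARD('n) * (barrier_slope M R t (norm x) / norm x))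
      - b x \<bullet> ((barrier_slope M R t (norm x) / norm x) *\<^sub>R x)"
    (is "0 < ?residual")
proof -
  define n where "n = real CARD('n)"
  define r where "r = norm x"
  define X where "X = M / Lam R"
  define E where "E = M * exp (K * t - Lam r)"
  define Q where "Q = barrier_slope M R t r"
  have "Q = X - E" unfolding Q_def X_def E_def barrier_slope_def ..
  have "0 < r" "r0 < r" using x r0_pos unfolding r_def by auto
  have "0 < X" unfolding X_def using \<open>0 < M\<close> Lam_pos[OF R] by simp
  have "0 < E" unfolding E_def using \<open>0 < M\<close> by simp
  have b_term: "b x \<bullet> ((Q / r) *\<^sub>R x) \<le> \<beta> * E + \<beta> * X"
  proof -
    have "b x \<bullet> ((Q / r) *\<^sub>R x) \<le> norm (b x) * norm ((Q / r) *\<^sub>R x)"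
      by (rule norm_cauchy_schwarz)
    also have "\<dots> = norm (b x) * \<bar>Q\<bar>" using \<open>0 < r\<close> by (simp add: r_def abs_div)
    also have "\<dots> \<le> \<beta> * (E + X)"
      using b_bound beta_nonneg x \<open>0 < E\<close> \<open>0 < X\<close> \<open>Q = X - E\<close>
      by (intro mult_mono) (auto simp: abs_le_iff)
    finally show ?thesis by (simp add: distrib_left)
  qed
  have n_term: "(n - 1) * Q / r \<le> (n - 1) / r0 * X"
  proof -
    have "Q / r \<le> X / r0"
      using \<open>0 < E\<close> \<open>0 < X\<close> \<open>r0 < r\<close> r0_pos \<open>Q = X - E\<close>
      by (smt (verit) divide_right_mono frac_le)
    then have "(n - 1) * (Q / r) \<le> (n - 1) * (X / r0)"
      by (rule mult_left_mono) (simp add: n_def)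
    then show ?thesis by simp
  qed
  have m_term: "E * m r \<le> m_hi * E" using m_bounds \<open>r0 < r\<close> \<open>0 < E\<close> by simp
  have "K * E = m_hi * E + \<beta> * E + E" and "C * X = (n - 1) / r0 * X + \<beta> * X + X"
    unfolding K_def C_def n_def by (simp_all add: algebra_simps)
  then have "0 < K * E + C * X - (E * m r + (n - 1) * Q / r) - b x \<bullet> ((Q / r) *\<^sub>R x)"
    using b_term n_term m_term \<open>0 < E\<close> \<open>0 < X\<close> by linarith
  also have "(E * m r * r - Q) / r\<^sup>2 * r + n * (Q / r) = E * m r + (n - 1) * Q / r"
    using \<open>0 < r\<close> by (simp add: field_simps power2_eq_square)
  then have "K * E + C * X - (E * m r + (n - 1) * Q / r) - b x \<bullet> ((Q / r) *\<^sub>R x) = ?residual"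
    unfolding r_def[symmetric] E_def X_def Q_def n_def by (simp add: mult_ac)
  finally show ?thesis .
qed

lemma barrier_nonneg:
  assumes "0 < M" "r0 < R" "r0 \<le> norm y" "0 \<le> t"
  shows "0 \<le> barrier M R y t"
  unfolding barrier_def using assms C_pos Lam_pos[of R] Lam_nonneg[of "norm y"]
  by (intro add_nonneg_nonneg divide_nonneg_pos mult_nonneg_nonneg) auto

lemma barrier_ge_M_on_boundary:
  assumes "0 < M" "r0 < R" "norm y = r0 \<or> norm y = R" "0 \<le> t"
  shows "M \<le> barrier M R y t"
  using assms(3)
proof
  assume "norm y = r0"
  then have "M \<le> M * exp (K * t - Lam (norm y))"
    using assms(1) K_pos assms(4) by (simp add: Lam_def)
  moreover have "0 \<le> M * (Lam (norm y) + C * t) / Lam R"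
    using assms(1) C_pos Lam_pos[OF assms(2)] assms(4) \<open>norm y = r0\<close> by (simp add: Lam_def)
  ultimately show ?thesis unfolding barrier_def by simp
next
  assume "norm y = R"
  then have "M * (Lam (norm y) + C * t) / Lam R = M + M * C * t / Lam R"
    using Lam_pos[OF assms(2)] by (simp add: field_simps)
  moreover have "0 \<le> M * C * t / Lam R"
    using assms(1) C_pos Lam_pos[OF assms(2)] assms(4) by simp
  ultimately show ?thesis unfolding barrier_def using assms(1) by (simp add: add_increasing)
qed

end

locale outer_subsolution = radial_coefficients A b m m_lo m_hi \<beta> r0
  for A :: "real^'n \<Rightarrow> real^'n^'n" and b m m_lo m_hi \<beta> r0 +
  fixes T :: real and w wt :: "real^'n \<Rightarrow> real \<Rightarrow> real"
    and Dw :: "real^'n \<Rightarrow> real \<Rightarrow> real^'n" and D2w :: "real^'n \<Rightarrow> real \<Rightarrow> real^'n^'n"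
  assumes T_pos: "0 < T"
    and w_cont: "continuous_on ({x. r0 \<le> norm x} \<times> {0..T}) (\<lambda>(x, t). w x t)"
    and w_bounded: "\<exists>M. \<forall>x t. r0 \<le> norm x \<and> 0 \<le> t \<and> t \<le> T \<longrightarrow> \<bar>w x t\<bar> \<le> M"
    and w_t: "\<forall>x\<in>{x. r0 < norm x}. \<forall>t\<in>{0<..T}.
       ((\<lambda>s. w x s) has_real_derivative wt x t) (at t within {0<..T})"
    and w_x: "\<forall>x\<in>{x. r0 < norm x}. \<forall>t\<in>{0<..T}. ((\<lambda>y. w y t) has_derivative (\<lambda>h. Dw x t \<bullet> h)) (at x)"
    and w_xx: "\<forall>x\<in>{x. r0 < norm x}. \<forall>t\<in>{0<..T}.
       ((\<lambda>y. Dw y t) has_derivative (\<lambda>h. D2w x t *v h)) (at x)"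
    and w_init: "\<forall>x\<in>{x. r0 < norm x}. w x 0 \<le> 0"
    and Lw: "\<forall>x\<in>{x. r0 < norm x}. \<forall>t\<in>{0<..T}. Lop A b wt Dw x t \<le> 0"
begin

lemma Lop_pos_at_interior_max:
  assumes "0 < M" and R: "r0 < R" and x: "r0 < norm x" "norm x < R" and t: "0 < t" "t \<le> T"
    and max: "\<forall>y s. r0 \<le> norm y \<and> norm y \<le> R \<and> 0 \<le> s \<and> s \<le> T \<longrightarrow>
        w y s - barrier M R y s \<le> w x t - barrier M R x t"
  shows "0 < Lop A b wt Dw x t"
proof -
  define Om where "Om = {y::real^'n. r0 < norm y \<and> norm y < R}"
  define Q where "Q = barrier_slope M R t"
  have "x \<noteq> 0" "0 < norm x" using x r0_pos by auto
  have "K * M * exp (K * t - Lam (norm x)) + M * C / Lam R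
      - ((M * exp (K * t - Lam (norm x)) * m (norm x) * norm x - Q (norm x)) / (norm x)\<^sup>2 * norm x
        + real CARD('n) * (Q (norm x) / norm x))
      - b x \<bullet> ((Q (norm x) / norm x) *\<^sub>R x) \<le> Lop A b wt Dw x t"
  proof (rule Lop_ge_at_max[where Om = Om and \<Psi> = "barrier M R" and T = T and
        G = "\<lambda>y. (Q (norm y) * m (norm y) / norm y) *\<^sub>R y" and \<phi> = "\<lambda>\<rho>. Q \<rho> / \<rho>"])
    show "open Om" unfolding Om_def by (intro open_Collect_conj open_Collect_less continuous_intros)
    show "x \<in> Om" using x unfolding Om_def by auto
    show "\<forall>y\<in>Om. w y t - barrier M R y t \<le> w x t - barrier M R x t"
      "\<forall>s\<in>{0<..<t}. w x s - barrier M R x s \<le> w x t - barrier M R x t"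
      using max x t unfolding Om_def by auto
    show "((\<lambda>s. w x s) has_real_derivative wt x t) (at t within {0<..T})"
      "\<forall>y\<in>Om. ((\<lambda>y. w y t) has_derivative (\<lambda>h. Dw y t \<bullet> h)) (at y)"
      "((\<lambda>y. Dw y t) has_derivative (\<lambda>h. D2w x t *v h)) (at x)"
      using w_t w_x w_xx x t unfolding Om_def by auto
    show "((\<lambda>s. barrier M R x s) has_real_derivative
        K * M * exp (K * t - Lam (norm x)) + M * C / Lam R) (at t)"
      by (rule barrier_has_derivative_time[OF R])
    show "\<forall>y\<in>Om. ((\<lambda>y. barrier M R y t) has_derivative
        (\<lambda>h. ((Q (norm y) * m (norm y) / norm y) *\<^sub>R y) \<bullet> h)) (at y)"
      unfolding Q_def Om_def using barrier_has_derivative_space[OF R] by simp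
    have "Q differentiable (at (norm x))"
      using barrier_slope_has_derivative[OF x(1)] real_differentiable_def unfolding Q_def by blast
    then have "(\<lambda>\<rho>. Q \<rho> * m \<rho> / \<rho>) differentiable (at (norm x))"
      using m_diff x(1) \<open>0 < norm x\<close>
      by (intro differentiable_divide differentiable_mult differentiable_ident) auto
    then show "(\<lambda>y. (Q (norm y) * m (norm y) / norm y) *\<^sub>R y) differentiable (at x)"
      using \<open>x \<noteq> 0\<close> by (intro differentiable_radial_field)
    show "isCont A x" "\<And>H. \<forall>h. h \<bullet> (H *v h) \<le> 0 \<Longrightarrow> trace (A x ** H) \<le> 0"
      using A_cont A_trace x by blast+
    show "\<forall>y\<in>Om. A y *v ((Q (norm y) * m (norm y) / norm y) *\<^sub>R y) = (Q (norm y) / norm y) *\<^sub>R y"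
      using A_radial m_bounds m_lo_pos unfolding Om_def
      by (auto simp: matrix_vector_mult_scaleR) (smt (verit))
    show "((\<lambda>\<rho>. Q \<rho> / \<rho>) has_real_derivative
        (M * exp (K * t - Lam (norm x)) * m (norm x) * norm x - Q (norm x)) / (norm x)\<^sup>2) (at (norm x))"
      using DERIV_divide[OF barrier_slope_has_derivative[OF x(1)] DERIV_ident] \<open>0 < norm x\<close>
      unfolding Q_def by (simp add: power2_eq_square)
  qed (use t \<open>x \<noteq> 0\<close> in auto)
  then show ?thesis using barrier_residual_pos[OF \<open>0 < M\<close> R x(1), of t] unfolding Q_def by linarith
qed

lemma w_minus_barrier_attains_max:
  assumes "r0 < R" and "0 \<le> T"
  obtains x t where "r0 \<le> norm x" "norm x \<le> R" "0 \<le> t" "t \<le> T"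
    and "\<forall>y s. r0 \<le> norm y \<and> norm y \<le> R \<and> 0 \<le> s \<and> s \<le> T \<longrightarrow>
      w y s - barrier M R y s \<le> w x t - barrier M R x t"
proof -
  define Ks where "Ks = {y::real^'n. r0 \<le> norm y \<and> norm y \<le> R} \<times> {0..T}"
  have "compact {y::real^'n. r0 \<le> norm y \<and> norm y \<le> R}"
  proof (rule compact_eq_bounded_closed[THEN iffD2, OF conjI])
    show "bounded {y::real^'n. r0 \<le> norm y \<and> norm y \<le> R}"
      by (rule bounded_subset[OF bounded_cball[of 0 R]]) auto
    show "closed {y::real^'n. r0 \<le> norm y \<and> norm y \<le> R}"
      by (intro closed_Collect_conj closed_Collect_le continuous_intros)
  qed
  then have "compact Ks" unfolding Ks_def by (intro compact_Times compact_Icc)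
  moreover have "(r0 *\<^sub>R axis undefined 1, 0) \<in> Ks" using assms r0_pos unfolding Ks_def by simp
  then have "Ks \<noteq> {}" by blast
  moreover have "continuous_on Ks (\<lambda>(y, s). w y s - barrier M R y s)"
  proof -
    have "Ks \<subseteq> {x. r0 \<le> norm x} \<times> {0..T}" unfolding Ks_def by auto
    then have "continuous_on Ks (\<lambda>z. w (fst z) (snd z))"
      using continuous_on_subset[OF w_cont] by (simp add: case_prod_unfold)
    moreover have "continuous_on Ks (\<lambda>z. Lam (norm (fst z)))"
      by (rule continuous_on_compose2[OF continuous_on_Lam[of R]])
        (auto intro!: continuous_intros simp: Ks_def)
    ultimately show ?thesis unfolding case_prod_unfold barrier_def using Lam_pos[OF assms(1)]
      by (intro continuous_intros) auto
  qed
  ultimately obtain z where "z \<in> Ks" and "\<forall>z'\<in>Ks. (\<lambda>(y, s). w y s - barrier M R y s) z'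
      \<le> (\<lambda>(y, s). w y s - barrier M R y s) z"
    using continuous_attains_sup by blast
  then show ?thesis using that unfolding Ks_def by (cases z) auto
qed

lemma w_le_barrier:
  assumes "0 < M" and w_le: "\<forall>x t. r0 \<le> norm x \<and> 0 \<le> t \<and> t \<le> T \<longrightarrow> w x t \<le> M"
    and R: "r0 < R" and y: "r0 \<le> norm y" "norm y \<le> R" and s: "0 \<le> s" "s \<le> T"
  shows "w y s \<le> barrier M R y s"
proof -
  obtain x t where x: "r0 \<le> norm x" "norm x \<le> R" and t: "0 \<le> t" "t \<le> T"
    and max: "\<forall>y s. r0 \<le> norm y \<and> norm y \<le> R \<and> 0 \<le> s \<and> s \<le> T \<longrightarrow>
      w y s - barrier M R y s \<le> w x t - barrier M R x t"
    using w_minus_barrier_attains_max[OF R] T_pos by auto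
  have "w x t \<le> barrier M R x t"
  proof (rule ccontr)
    assume "\<not> w x t \<le> barrier M R x t"
    then have pos: "barrier M R x t < w x t" by simp
    moreover have "w x t \<le> M" using w_le x t by simp
    ultimately have "norm x \<noteq> r0" "norm x \<noteq> R"
      using barrier_ge_M_on_boundary[OF \<open>0 < M\<close> R _ t(1), of x] by auto
    then have "r0 < norm x" "norm x < R" using x by auto
    have "t \<noteq> 0"
    proof
      assume "t = 0"
      then have "w x t \<le> 0" using w_init \<open>r0 < norm x\<close> by simp
      then show False using pos barrier_nonneg[OF \<open>0 < M\<close> R x(1) t(1)] by simp
    qed
    then have "0 < Lop A b wt Dw x t"
      using Lop_pos_at_interior_max[OF \<open>0 < M\<close> R \<open>r0 < norm x\<close> \<open>norm x < R\<close> _ t(2) max] t by simp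
    moreover have "Lop A b wt Dw x t \<le> 0" using Lw \<open>r0 < norm x\<close> t \<open>t \<noteq> 0\<close> by simp
    ultimately show False by simp
  qed
  moreover have "w y s - barrier M R y s \<le> w x t - barrier M R x t" using max y s by simp
  ultimately show ?thesis by simp
qed

text \<open>Letting \<open>R \<rightarrow> \<infinity>\<close> in the barrier leaves only its first term, which decays since \<open>\<Lambda>\<close> grows linearly.\<close>
lemma w_le_exp_decay:
  assumes "0 < M" and w_le: "\<forall>x t. r0 \<le> norm x \<and> 0 \<le> t \<and> t \<le> T \<longrightarrow> w x t \<le> M"
    and y: "r0 \<le> norm y" and t: "0 \<le> t" "t \<le> T"
  shows "w y t \<le> M * exp (K * T - m_lo * (norm y - r0))"
proof (rule field_le_epsilon)
  fix e :: real assume "0 < e"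
  define B where "B = M * (Lam (norm y) + C * T)"
  have "0 \<le> B" unfolding B_def using \<open>0 < M\<close> C_pos Lam_nonneg[OF y] T_pos by simp
  define R where "R = max (norm y + 1) (r0 + B / (m_lo * e) + 1)"
  have R: "r0 < R" "norm y \<le> R" unfolding R_def using y by auto
  have "B / e + m_lo = m_lo * (B / (m_lo * e) + 1)" using m_lo_pos \<open>0 < e\<close> by (simp add: field_simps)
  also have "\<dots> \<le> m_lo * (R - r0)" using m_lo_pos unfolding R_def by (intro mult_left_mono) auto
  also have "\<dots> \<le> Lam R" using Lam_ge R by simp
  finally have "B / e \<le> Lam R" using m_lo_pos by simp
  moreover have "M * (Lam (norm y) + C * t) \<le> B"
    unfolding B_def using \<open>0 < M\<close> C_pos t by (intro mult_left_mono) auto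
  ultimately have "M * (Lam (norm y) + C * t) / Lam R \<le> e"
    using Lam_pos[OF R(1)] \<open>0 < e\<close> by (simp add: divide_le_eq pos_divide_le_eq mult.commute)
  moreover have "M * exp (K * t - Lam (norm y)) \<le> M * exp (K * T - m_lo * (norm y - r0))"
    using \<open>0 < M\<close> Lam_ge[OF y] mult_left_mono[OF t(2) less_imp_le[OF K_pos]] by simp
  ultimately have "barrier M R y t \<le> M * exp (K * T - m_lo * (norm y - r0)) + e"
    unfolding barrier_def by simp
  then show "w y t \<le> M * exp (K * T - m_lo * (norm y - r0)) + e"
    using w_le_barrier[OF \<open>0 < M\<close> w_le R(1) y R(2) t] by simp
qed

lemma w_le_positive_bound:
  obtains M where "0 < M" "\<forall>x t. r0 \<le> norm x \<and> 0 \<le> t \<and> t \<le> T \<longrightarrow> w x t \<le> M"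
proof -
  obtain M0 where M0: "\<forall>x t. r0 \<le> norm x \<and> 0 \<le> t \<and> t \<le> T \<longrightarrow> \<bar>w x t\<bar> \<le> M0"
    using w_bounded by blast
  have "\<forall>x t. r0 \<le> norm x \<and> 0 \<le> t \<and> t \<le> T \<longrightarrow> w x t \<le> \<bar>M0\<bar> + 1"
  proof (intro allI impI)
    fix x :: "real^'n" and t :: real
    assume "r0 \<le> norm x \<and> 0 \<le> t \<and> t \<le> T"
    then have "\<bar>w x t\<bar> \<le> M0" using M0 by blast
    then show "w x t \<le> \<bar>M0\<bar> + 1" using abs_ge_self[of M0] by linarith
  qed
  then show ?thesis using that[of "\<bar>M0\<bar> + 1"] by simp
qed

theorem Limsup_sphere_Sup_nonpos:
  "Limsup at_top (\<lambda>r. ereal (Sup {w x t | x t. norm x = r \<and> 0 \<le> t \<and> t \<le> T})) \<le> 0"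
proof -
  obtain M where "0 < M" and w_le: "\<forall>x t. r0 \<le> norm x \<and> 0 \<le> t \<and> t \<le> T \<longrightarrow> w x t \<le> M"
    by (rule w_le_positive_bound)
  define bound where "bound r = M * exp (K * T - m_lo * (r - r0))" for r
  have Sup_le: "Sup {w x t | x t. norm x = r \<and> 0 \<le> t \<and> t \<le> T} \<le> bound r" if "r0 \<le> r" for r
  proof (rule cSup_least)
    have "norm (r *\<^sub>R axis (undefined::'n) (1::real)) = r" using that r0_pos by simp
    then have "w (r *\<^sub>R axis (undefined::'n) 1) 0 \<in> {w x t | x t. norm x = r \<and> 0 \<le> t \<and> t \<le> T}"
      using T_pos by (auto intro!: exI[of _ "r *\<^sub>R axis (undefined::'n) 1"] exI[of _ "0::real"])
    then show "{w x t | x t. norm x = r \<and> 0 \<le> t \<and> t \<le> T} \<noteq> {}" by blast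
  next
    fix z assume "z \<in> {w x t | x t. norm x = r \<and> 0 \<le> t \<and> t \<le> T}"
    then obtain x t where "z = w x t" "norm x = r" "0 \<le> t" "t \<le> T" by blast
    then show "z \<le> bound r"
      using w_le_exp_decay[OF \<open>0 < M\<close> w_le, of x t] that unfolding bound_def by simp
  qed
  have "eventually (\<lambda>r. ereal (Sup {w x t | x t. norm x = r \<and> 0 \<le> t \<and> t \<le> T}) \<le> ereal (bound r))
      at_top"
    using eventually_ge_at_top[of r0] by eventually_elim (simp add: Sup_le)
  then have "Limsup at_top (\<lambda>r. ereal (Sup {w x t | x t. norm x = r \<and> 0 \<le> t \<and> t \<le> T}))
      \<le> Limsup at_top (\<lambda>r. ereal (bound r))"
    by (rule Limsup_mono)
  also have "\<dots> = 0"
  proof (rule lim_imp_Limsup[OF trivial_limit_at_top_linorder])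
    have "(bound \<longlongrightarrow> 0) at_top"
      unfolding bound_def using m_lo_pos by real_asymp
    then show "((\<lambda>r. ereal (bound r)) \<longlongrightarrow> 0) at_top"
      by (simp add: zero_ereal_def tendsto_ereal)
  qed
  finally show ?thesis .
qed

end

section \<open>The two-phase coefficients\<close>

definition hfun :: "nat \<Rightarrow> (nat \<Rightarrow> real) \<Rightarrow> (nat \<Rightarrow> real) \<Rightarrow> real \<Rightarrow> real" where
  "hfun N a \<alpha> s = a 0 + (\<Sum>j=1..N. a j * (1 + \<alpha> j) * s powr \<alpha> j)"

lemma gfun_ge: "g_admissible N a \<alpha> \<Longrightarrow> 0 \<le> s \<Longrightarrow> a 0 \<le> gfun N a \<alpha> s"
  unfolding g_admissible_def gfun_def by (auto intro!: sum_nonneg)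

lemma hfun_ge: "g_admissible N a \<alpha> \<Longrightarrow> 0 \<le> s \<Longrightarrow> a 0 \<le> hfun N a \<alpha> s"
  unfolding g_admissible_def hfun_def by (auto intro!: sum_nonneg simp: less_imp_le)

lemma continuous_on_gfun: "g_admissible N a \<alpha> \<Longrightarrow> continuous_on {0..} (gfun N a \<alpha>)"
  unfolding g_admissible_def gfun_def by (intro continuous_intros continuous_on_powr') auto

lemma continuous_on_hfun: "g_admissible N a \<alpha> \<Longrightarrow> continuous_on {0..} (hfun N a \<alpha>)"
  unfolding g_admissible_def hfun_def by (intro continuous_intros continuous_on_powr') auto

lemma hfun_differentiable:
  assumes "0 < s"
  shows "hfun N a \<alpha> differentiable (at s)"
proof -
  have "((\<lambda>s. a 0 + (\<Sum>j=1..N. a j * (1 + \<alpha> j) * s powr \<alpha> j)) has_real_derivative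
      0 + (\<Sum>j=1..N. a j * (1 + \<alpha> j) * (\<alpha> j * s powr (\<alpha> j - 1)))) (at s)"
    by (intro DERIV_add DERIV_const DERIV_sum DERIV_cmult has_real_derivative_powr[OF assms])
  then show ?thesis unfolding hfun_def real_differentiable_def by blast
qed

lemma gfun_has_derivative:
  assumes "0 < s"
  shows "(gfun N a \<alpha> has_real_derivative (\<Sum>j=1..N. a j * (\<alpha> j * s powr (\<alpha> j - 1)))) (at s)"
proof -
  have "((\<lambda>s. a 0 + (\<Sum>j=1..N. a j * s powr \<alpha> j)) has_real_derivative
      0 + (\<Sum>j=1..N. a j * (\<alpha> j * s powr (\<alpha> j - 1)))) (at s)"
    by (intro DERIV_add DERIV_const DERIV_sum DERIV_cmult has_real_derivative_powr[OF assms])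
  then show ?thesis unfolding gfun_def by simp
qed

text \<open>\<open>h(s) = (s g(s))'\<close> is the eigenvalue of \<open>G'(u)\<close> in the direction of \<open>u\<close>, \<open>|u| = s\<close>.\<close>
lemma gfun_plus_deriv:
  assumes "0 \<le> s"
  shows "gfun N a \<alpha> s + deriv (gfun N a \<alpha>) s * s = hfun N a \<alpha> s"
proof (cases "s = 0")
  case False
  then have "0 < s" using assms by simp
  have "(\<Sum>j=1..N. a j * (\<alpha> j * s powr (\<alpha> j - 1))) * s = (\<Sum>j=1..N. a j * \<alpha> j * s powr \<alpha> j)"
    unfolding sum_distrib_right
  proof (rule sum.cong[OF refl])
    fix j
    have "s powr (\<alpha> j - 1) * s = s powr \<alpha> j" using \<open>0 < s\<close> by (simp add: powr_diff)
    then show "a j * (\<alpha> j * s powr (\<alpha> j - 1)) * s = a j * \<alpha> j * s powr \<alpha> j"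
      by (metis mult.assoc)
  qed
  then show ?thesis
    using DERIV_imp_deriv[OF gfun_has_derivative[OF \<open>0 < s\<close>]]
    by (simp add: gfun_def hfun_def sum.distrib algebra_simps)
qed (simp add: gfun_def hfun_def)

lemma C1_differentiable_on_has_real_derivative:
  fixes f :: "real \<Rightarrow> real"
  assumes "f C1_differentiable_on S" "s \<in> S"
  shows "(f has_real_derivative vector_derivative f (at s)) (at s)"
  using assms unfolding C1_differentiable_on_eq has_real_derivative_iff_has_vector_derivative
  by (auto simp: vector_derivative_works[symmetric])

lemma C1_differentiable_on_imp_continuous_on:
  fixes f :: "real \<Rightarrow> real"
  shows "f C1_differentiable_on S \<Longrightarrow> continuous_on S f"
  unfolding C1_differentiable_on_eq
  by (auto intro!: continuous_at_imp_continuous_on differentiable_imp_continuous_within)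

lemma pos_of_left_root_deriv_pos:
  fixes f :: "real \<Rightarrow> real"
  assumes "continuous_on {a..b} f" "f C1_differentiable_on {a<..<b}" "f a = 0"
    and "\<forall>s\<in>{a<..<b}. 0 < deriv f s" and "a < s" "s < b"
  shows "0 < f s"
proof -
  have "\<exists>l z. a < z \<and> z < s \<and> DERIV f z :> l \<and> f s - f a = (s - a) * l"
    by (rule MVT) (use assms in \<open>auto intro: continuous_on_subset simp: C1_differentiable_on_eq\<close>)
  then obtain l z where "a < z" "z < s" "DERIV f z :> l" "f s - f a = (s - a) * l" by blast
  moreover have "0 < l" using DERIV_imp_deriv[OF \<open>DERIV f z :> l\<close>] assms \<open>a < z\<close> \<open>z < s\<close> by auto
  ultimately show ?thesis using assms by simp
qed

lemma pos_of_right_root_deriv_neg: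
  fixes f :: "real \<Rightarrow> real"
  assumes "continuous_on {a..b} f" "f C1_differentiable_on {a<..<b}" "f b = 0"
    and "\<forall>s\<in>{a<..<b}. deriv f s < 0" and "a < s" "s < b"
  shows "0 < f s"
proof -
  have "\<exists>l z. s < z \<and> z < b \<and> DERIV f z :> l \<and> f b - f s = (b - s) * l"
    by (rule MVT) (use assms in \<open>auto intro: continuous_on_subset simp: C1_differentiable_on_eq\<close>)
  then obtain l z where "s < z" "z < b" "DERIV f z :> l" "f b - f s = (b - s) * l" by blast
  moreover have "l < 0" using DERIV_imp_deriv[OF \<open>DERIV f z :> l\<close>] assms \<open>s < z\<close> \<open>z < b\<close> by auto
  ultimately show ?thesis using assms mult_pos_neg[of "b - s" l] by simp
qed

lemma Ffun_C1:
  fixes pcd f :: "real \<Rightarrow> real"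
  assumes pcd: "pcd C1_differentiable_on {0<..<1}" "\<forall>s\<in>{0<..<1}. 0 < pcd s"
    and f: "f C1_differentiable_on {0<..<1}" "\<forall>s\<in>{0<..<1}. 0 < f s"
  shows "\<forall>s\<in>{0<..<1}. 0 < Ffun pcd f s"
    and "\<forall>s\<in>{0<..<1}. (Ffun pcd f has_real_derivative deriv (Ffun pcd f) s) (at s)"
    and "continuous_on {0<..<1} (Ffun pcd f)"
    and "continuous_on {0<..<1} (deriv (Ffun pcd f))"
proof -
  show "\<forall>s\<in>{0<..<1}. 0 < Ffun pcd f s" using pcd f by (simp add: Ffun_def)
  define P' where "P' s = vector_derivative pcd (at s)" for s
  define f' where "f' s = vector_derivative f (at s)" for s
  define D where "D s = - (P' s * f s + pcd s * f' s) / (pcd s * f s)\<^sup>2" for s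
  have dF: "(Ffun pcd f has_real_derivative D s) (at s)" if "s \<in> {0<..<1}" for s
  proof -
    have "pcd s * f s \<noteq> 0" using pcd f that by (metis less_irrefl mult_pos_pos)
    moreover have "Ffun pcd f = (\<lambda>s. inverse (pcd s * f s))"
      by (simp add: Ffun_def fun_eq_iff divide_inverse)
    ultimately show ?thesis
      using DERIV_inverse_fun[OF DERIV_mult[OF C1_differentiable_on_has_real_derivative[OF pcd(1) that]
            C1_differentiable_on_has_real_derivative[OF f(1) that]]]
      unfolding D_def P'_def f'_def by (simp add: divide_inverse power2_eq_square algebra_simps)
  qed
  then show "\<forall>s\<in>{0<..<1}. (Ffun pcd f has_real_derivative deriv (Ffun pcd f) s) (at s)"
    using DERIV_imp_deriv by metis
  show "continuous_on {0<..<1} (Ffun pcd f)"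
    using dF by (intro continuous_at_imp_continuous_on) (meson DERIV_isCont)
  have "continuous_on {0<..<1} P'" "continuous_on {0<..<1} f'"
    unfolding P'_def f'_def using pcd(1) f(1) by (auto simp: C1_differentiable_on_eq)
  then have "continuous_on {0<..<1} D"
    unfolding D_def using C1_differentiable_on_imp_continuous_on[OF pcd(1)]
      C1_differentiable_on_imp_continuous_on[OF f(1)] pcd(2) f(2)
    by (intro continuous_intros) auto
  then show "continuous_on {0<..<1} (deriv (Ffun pcd f))"
    by (rule continuous_on_eq) (use dF DERIV_imp_deriv in metis)
qed

lemma Ffun_comp_props:
  fixes pcd f S :: "real \<Rightarrow> real"
  assumes "pcd C1_differentiable_on {0<..<1}" "\<forall>s\<in>{0<..<1}. 0 < pcd s"
    and "f C1_differentiable_on {0<..<1}" "\<forall>s\<in>{0<..<1}. 0 < f s"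
    and S_cont: "continuous_on {r0..} S" and S_diff: "\<forall>r>r0. S differentiable (at r)"
    and S_bounds: "0 < sl" "su < 1" "\<forall>r\<ge>r0. sl \<le> S r \<and> S r \<le> su"
  shows "continuous_on {r0..} (\<lambda>r. Ffun pcd f (S r))"
    and "\<forall>r>r0. (\<lambda>r. Ffun pcd f (S r)) differentiable (at r)"
    and "\<exists>lo hi D. 0 < lo \<and> (\<forall>r\<ge>r0. lo \<le> Ffun pcd f (S r) \<and> Ffun pcd f (S r) \<le> hi
                                   \<and> \<bar>deriv (Ffun pcd f) (S r)\<bar> \<le> D)"
proof -
  let ?F = "Ffun pcd f"
  note F = Ffun_C1[OF assms(1-4)]
  have range: "{sl..su} \<subseteq> {0<..<1}" using S_bounds by auto
  have S_range: "S r \<in> {sl..su}" if "r0 \<le> r" for r using S_bounds that by simp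
  show "continuous_on {r0..} (\<lambda>r. ?F (S r))"
    by (rule continuous_on_compose2[OF F(3) S_cont]) (use S_range range in auto)
  show "\<forall>r>r0. (\<lambda>r. ?F (S r)) differentiable (at r)"
  proof (intro allI impI)
    fix r assume "r0 < r"
    then have "(?F has_real_derivative deriv ?F (S r)) (at (S r))"
      using F(2) S_range[of r] range by auto
    then have "?F differentiable (at (S r))" using real_differentiable_def by blast
    then show "(\<lambda>r. ?F (S r)) differentiable (at r)"
      using differentiable_chain_at[OF S_diff[rule_format, OF \<open>r0 < r\<close>]] by (simp add: o_def)
  qed
  have "sl \<le> su" using S_bounds by force
  obtain s1 where s1: "s1 \<in> {sl..su}" "\<forall>s\<in>{sl..su}. ?F s1 \<le> ?F s"
    using continuous_attains_inf[OF compact_Icc _ continuous_on_subset[OF F(3) range]] \<open>sl \<le> su\<close> by auto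
  obtain s2 where s2: "\<forall>s\<in>{sl..su}. ?F s \<le> ?F s2"
    using continuous_attains_sup[OF compact_Icc _ continuous_on_subset[OF F(3) range]] \<open>sl \<le> su\<close> by auto
  obtain D where D: "\<forall>s\<in>{sl..su}. \<bar>deriv ?F s\<bar> \<le> D"
    using compact_imp_bounded[OF compact_continuous_image[OF continuous_on_subset[OF F(4) range]
          compact_Icc]] unfolding bounded_iff by auto
  show "\<exists>lo hi D. 0 < lo \<and> (\<forall>r\<ge>r0. lo \<le> ?F (S r) \<and> ?F (S r) \<le> hi
                                   \<and> \<bar>deriv ?F (S r)\<bar> \<le> D)"
    by (rule exI[of _ "?F s1"], rule exI[of _ "?F s2"], rule exI[of _ D])
      (use F(1) range s1 s2 D S_range in auto)
qed

text \<open>The modulus of \<open>u\<^sup>*\<close> on the sphere \<open>|x| = r\<close> in dimension \<open>d\<close>.\<close>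
definition ustar_speed :: "real \<Rightarrow> real \<Rightarrow> real \<Rightarrow> real" where
  "ustar_speed d c r = \<bar>c\<bar> * r powr (1 - d)"

lemma norm_ustar: "norm (ustar c y) = ustar_speed (real CARD('n)) c (norm (y :: real^'n))"
proof (cases "y = 0")
  case False
  then have "norm y powr (- real CARD('n)) * norm y = norm y powr (1 - real CARD('n))"
    using powr_add[of "norm y" "- real CARD('n)" 1] by simp
  then show ?thesis by (simp add: ustar_def ustar_speed_def abs_mult mult.assoc)
qed (simp add: ustar_def ustar_speed_def)

lemma ustar_speed_nonneg: "0 \<le> ustar_speed d c r"
  by (simp add: ustar_speed_def)

lemma ustar_speed_le:
  assumes "1 \<le> d" "0 < r0" "r0 \<le> r"
  shows "ustar_speed d c r \<le> ustar_speed d c r0"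
  unfolding ustar_speed_def using assms by (intro mult_left_mono powr_mono2') auto

lemma continuous_on_ustar_speed: "0 < r0 \<Longrightarrow> continuous_on {r0..} (ustar_speed d c)"
  unfolding ustar_speed_def by (intro continuous_intros) auto

lemma ustar_speed_has_derivative:
  "0 < r \<Longrightarrow> (ustar_speed d c has_real_derivative \<bar>c\<bar> * ((1 - d) * r powr (1 - d - 1))) (at r)"
  unfolding ustar_speed_def by (intro DERIV_cmult has_real_derivative_powr)

lemma GJac_ustar:
  fixes y :: "real^'n" and c :: real
  assumes "y \<noteq> 0"
  defines "\<sigma> \<equiv> norm (ustar c y)"
  shows "GJac g (ustar c y) = g \<sigma> *\<^sub>R mat 1 + (deriv g \<sigma> * \<sigma>) *\<^sub>R proj_matrix y"
proof (cases "c = 0")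
  case False
  define k where "k = c * norm y powr (- real CARD('n))"
  have u: "ustar c y = k *\<^sub>R y" by (simp add: ustar_def k_def)
  have "k \<noteq> 0" using False assms(1) by (simp add: k_def)
  have \<sigma>: "\<sigma> = \<bar>k\<bar> * norm y" by (simp add: \<sigma>_def u)
  have kk: "k * k / \<sigma> = \<sigma> / (norm y)\<^sup>2"
    using \<open>k \<noteq> 0\<close> assms(1) unfolding \<sigma> by (simp add: field_simps power2_eq_square abs_mult_self_eq)
  have "deriv g \<sigma> / \<sigma> * (k * y$i * (k * y$j)) = deriv g \<sigma> * (k * k / \<sigma>) * (y$i * y$j)" for i j
    by (simp add: mult_ac)
  then have "(deriv g \<sigma> / \<sigma>) *\<^sub>R (\<chi> i j. ustar c y $ i * ustar c y $ j)
      = (deriv g \<sigma> * \<sigma>) *\<^sub>R proj_matrix y"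
    unfolding u proj_matrix_def vec_eq_iff kk by simp
  moreover have "ustar c y \<noteq> 0" using \<open>k \<noteq> 0\<close> assms(1) by (simp add: u)
  ultimately show ?thesis by (simp add: GJac_def \<sigma>_def)
qed (simp add: GJac_def ustar_def \<sigma>_def)

locale two_phase_outer =
  fixes N1 N2 :: nat and a1 a2 \<alpha>1 \<alpha>2 :: "nat \<Rightarrow> real" and f1 f2 pcd S :: "real \<Rightarrow> real"
    and r0 c1 c2 sl su :: real and n :: nat
  assumes g1_adm: "g_admissible N1 a1 \<alpha>1" and g2_adm: "g_admissible N2 a2 \<alpha>2"
    and f1_cont: "continuous_on {0..1} f1" and f1_C1: "f1 C1_differentiable_on {0<..<1}"
    and f2_cont: "continuous_on {0..1} f2" and f2_C1: "f2 C1_differentiable_on {0<..<1}"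
    and f1_0: "f1 0 = 0" and f2_1: "f2 1 = 0"
    and f1_mono: "\<forall>s\<in>{0<..<1}. deriv f1 s > 0"
    and f2_mono: "\<forall>s\<in>{0<..<1}. deriv f2 s < 0"
    and pcd_C1: "pcd C1_differentiable_on {0<..<1}"
    and pcd_pos: "\<forall>s\<in>{0<..<1}. pcd s > 0"
    and r0_pos: "0 < r0"
    and S_cont: "continuous_on {r0..} S" and S_diff: "\<forall>r>r0. S differentiable (at r)"
    and S_bounds: "0 < sl" "su < 1" "\<forall>r\<ge>r0. sl \<le> S r \<and> S r \<le> su"
    and n_pos: "0 < n"
begin

abbreviation "g1 \<equiv> gfun N1 a1 \<alpha>1"
abbreviation "g2 \<equiv> gfun N2 a2 \<alpha>2"
abbreviation "F1 \<equiv> Ffun pcd f1"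
abbreviation "F2 \<equiv> Ffun pcd f2"
abbreviation "\<sigma> \<equiv> ustar_speed (real n)"

text \<open>The eigenvalues of \<open>B(x)\<close> transversal to and along \<open>x\<close>, as functions of \<open>|x|\<close>.\<close>
definition transversal_coeff :: "real \<Rightarrow> real" where
  "transversal_coeff r = F1 (S r) * g1 (\<sigma> c1 r) + F2 (S r) * g2 (\<sigma> c2 r)"

definition radial_coeff :: "real \<Rightarrow> real" where
  "radial_coeff r = F1 (S r) * hfun N1 a1 \<alpha>1 (\<sigma> c1 r) + F2 (S r) * hfun N2 a2 \<alpha>2 (\<sigma> c2 r)"

lemma f1_pos: "\<forall>s\<in>{0<..<1}. 0 < f1 s"
  using pos_of_left_root_deriv_pos[OF f1_cont f1_C1 f1_0 f1_mono] by simp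

lemma f2_pos: "\<forall>s\<in>{0<..<1}. 0 < f2 s"
  using pos_of_right_root_deriv_neg[OF f2_cont f2_C1 f2_1 f2_mono] by simp

lemmas F1_comp = Ffun_comp_props[OF pcd_C1 pcd_pos f1_C1 f1_pos S_cont S_diff S_bounds]
lemmas F2_comp = Ffun_comp_props[OF pcd_C1 pcd_pos f2_C1 f2_pos S_cont S_diff S_bounds]

lemma bounded_comp_ustar_speed:
  fixes \<phi> :: "real \<Rightarrow> real"
  assumes "continuous_on {0..} \<phi>"
  obtains B where "\<forall>r\<ge>r0. \<bar>\<phi> (\<sigma> c r)\<bar> \<le> B"
proof -
  have range: "\<sigma> c r \<in> {0..\<sigma> c r0}" if "r0 \<le> r" for r
    using ustar_speed_le[of "real n" r0 r c] ustar_speed_nonneg n_pos r0_pos that by auto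
  have cont: "continuous_on {0..\<sigma> c r0} \<phi>" by (rule continuous_on_subset[OF assms]) auto
  obtain B where "\<forall>s\<in>{0..\<sigma> c r0}. \<bar>\<phi> s\<bar> \<le> B"
    using compact_imp_bounded[OF compact_continuous_image[OF cont compact_Icc]]
    unfolding bounded_iff by auto
  then show ?thesis using that range by blast
qed

lemma transversal_coeff_pos: "r0 \<le> r \<Longrightarrow> 0 < transversal_coeff r"
  unfolding transversal_coeff_def using F1_comp(3) F2_comp(3) ustar_speed_nonneg
    gfun_ge[OF g1_adm] gfun_ge[OF g2_adm] g1_adm g2_adm
  by (smt (verit, best) g_admissible_def mult_pos_pos)

lemma radial_coeff_bounds:
  obtains lo hi where "0 < lo" "\<forall>r\<ge>r0. lo \<le> radial_coeff r \<and> radial_coeff r \<le> hi"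
proof -
  obtain lo1 hi1 where F1: "0 < lo1" "\<forall>r\<ge>r0. lo1 \<le> F1 (S r) \<and> F1 (S r) \<le> hi1"
    using F1_comp(3) by blast
  obtain lo2 hi2 where F2: "0 < lo2" "\<forall>r\<ge>r0. lo2 \<le> F2 (S r) \<and> F2 (S r) \<le> hi2"
    using F2_comp(3) by blast
  obtain H1 where H1: "\<forall>r\<ge>r0. \<bar>hfun N1 a1 \<alpha>1 (\<sigma> c1 r)\<bar> \<le> H1"
    using bounded_comp_ustar_speed[OF continuous_on_hfun[OF g1_adm]] by blast
  obtain H2 where H2: "\<forall>r\<ge>r0. \<bar>hfun N2 a2 \<alpha>2 (\<sigma> c2 r)\<bar> \<le> H2"
    using bounded_comp_ustar_speed[OF continuous_on_hfun[OF g2_adm]] by blast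
  have h: "a1 0 \<le> hfun N1 a1 \<alpha>1 (\<sigma> c1 r)" "a2 0 \<le> hfun N2 a2 \<alpha>2 (\<sigma> c2 r)" for r
    using hfun_ge[OF g1_adm] hfun_ge[OF g2_adm] ustar_speed_nonneg by auto
  have "0 < a1 0" "0 < a2 0" using g1_adm g2_adm unfolding g_admissible_def by auto
  then have h_nonneg: "0 \<le> hfun N1 a1 \<alpha>1 (\<sigma> c1 r)" "0 \<le> hfun N2 a2 \<alpha>2 (\<sigma> c2 r)" for r
    using h[of r] by linarith+
  show ?thesis
  proof (rule that[of "lo1 * a1 0" "hi1 * H1 + hi2 * H2"])
    show "0 < lo1 * a1 0" using F1(1) \<open>0 < a1 0\<close> by simp
    show "\<forall>r\<ge>r0. lo1 * a1 0 \<le> radial_coeff r \<and> radial_coeff r \<le> hi1 * H1 + hi2 * H2"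
    proof (intro allI impI conjI)
    fix r assume "r0 \<le> r"
    then have "lo1 * a1 0 \<le> F1 (S r) * hfun N1 a1 \<alpha>1 (\<sigma> c1 r)"
      using F1 h \<open>0 < a1 0\<close> by (auto intro!: mult_mono)
    moreover have "0 \<le> F2 (S r)" "0 \<le> hfun N2 a2 \<alpha>2 (\<sigma> c2 r)"
      using F2 \<open>r0 \<le> r\<close> h(2)[of r] \<open>0 < a2 0\<close> by force+
    ultimately show "lo1 * a1 0 \<le> radial_coeff r"
      unfolding radial_coeff_def by (auto intro!: add_increasing2 mult_nonneg_nonneg)
    have "F1 (S r) * hfun N1 a1 \<alpha>1 (\<sigma> c1 r) \<le> hi1 * H1"
      and "F2 (S r) * hfun N2 a2 \<alpha>2 (\<sigma> c2 r) \<le> hi2 * H2"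
      using F1 F2 H1 H2 h_nonneg \<open>r0 \<le> r\<close> by (auto intro!: mult_mono simp: abs_le_iff)
    then show "radial_coeff r \<le> hi1 * H1 + hi2 * H2" unfolding radial_coeff_def by simp
    qed
  qed
qed

lemma radial_coeff_pos: "r0 \<le> r \<Longrightarrow> 0 < radial_coeff r"
  by (metis radial_coeff_bounds order_less_le_trans)

lemma continuous_on_transversal_coeff: "continuous_on {r0..} transversal_coeff"
  unfolding transversal_coeff_def using F1_comp(1) F2_comp(1) r0_pos ustar_speed_nonneg
  by (intro continuous_intros continuous_on_compose2[OF continuous_on_gfun[OF g1_adm]]
      continuous_on_compose2[OF continuous_on_gfun[OF g2_adm]] continuous_on_ustar_speed) auto

lemma continuous_on_radial_coeff: "continuous_on {r0..} radial_coeff"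
  unfolding radial_coeff_def using F1_comp(1) F2_comp(1) r0_pos ustar_speed_nonneg
  by (intro continuous_intros continuous_on_compose2[OF continuous_on_hfun[OF g1_adm]]
      continuous_on_compose2[OF continuous_on_hfun[OF g2_adm]] continuous_on_ustar_speed) auto

lemma hfun_comp_ustar_speed_differentiable:
  assumes "0 < r"
  shows "(\<lambda>r. hfun N a \<alpha> (ustar_speed d c r)) differentiable (at r)"
proof (cases "c = 0")
  case False
  then have "hfun N a \<alpha> differentiable (at (ustar_speed d c r))"
    using assms by (intro hfun_differentiable) (simp add: ustar_speed_def)
  moreover have "ustar_speed d c differentiable (at r)"
    using ustar_speed_has_derivative[OF assms] real_differentiable_def by blast
  ultimately show ?thesis using differentiable_chain_at by (fastforce simp: o_def)
qed (simp add: ustar_speed_def)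

lemma radial_coeff_differentiable: "r0 < r \<Longrightarrow> radial_coeff differentiable (at r)"
  unfolding radial_coeff_def using F1_comp(2) F2_comp(2) r0_pos
  by (intro differentiable_add differentiable_mult hfun_comp_ustar_speed_differentiable) auto

lemma Bmat_eq:
  fixes y :: "real^'n"
  assumes "CARD('n) = n" and "r0 \<le> norm y"
  shows "Bmat F1 F2 g1 g2 c1 c2 S y = transversal_coeff (norm y) *\<^sub>R mat 1
      + (radial_coeff (norm y) - transversal_coeff (norm y)) *\<^sub>R proj_matrix y"
proof -
  have "y \<noteq> 0" using assms(2) r0_pos by auto
  have J: "GJac (gfun N a \<alpha>) (ustar c y) = gfun N a \<alpha> (\<sigma> c (norm y)) *\<^sub>R mat 1
      + (hfun N a \<alpha> (\<sigma> c (norm y)) - gfun N a \<alpha> (\<sigma> c (norm y))) *\<^sub>R proj_matrix y" for N a \<alpha> c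
  proof -
    have "deriv (gfun N a \<alpha>) (\<sigma> c (norm y)) * \<sigma> c (norm y)
        = hfun N a \<alpha> (\<sigma> c (norm y)) - gfun N a \<alpha> (\<sigma> c (norm y))"
      using gfun_plus_deriv[where N = N and a = a and \<alpha> = \<alpha>, OF ustar_speed_nonneg[of "real n" c "norm y"]]
      by linarith
    then show ?thesis using GJac_ustar[OF \<open>y \<noteq> 0\<close>, of "gfun N a \<alpha>" c]
      by (simp add: norm_ustar assms(1))
  qed
  show ?thesis
    unfolding Bmat_def J transversal_coeff_def radial_coeff_def
    by (simp add: scaleR_add_right scaleR_diff_left scaleR_diff_right algebra_simps)
qed

lemma Amat_eq:
  fixes y :: "real^'n"
  assumes "CARD('n) = n" and "r0 \<le> norm y"
  shows "Amat F1 F2 g1 g2 c1 c2 S y = (1 / transversal_coeff (norm y)) *\<^sub>R mat 1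
      + (1 / radial_coeff (norm y) - 1 / transversal_coeff (norm y)) *\<^sub>R proj_matrix y"
proof -
  have "y \<noteq> 0" using assms(2) r0_pos by auto
  moreover have "transversal_coeff (norm y) \<noteq> 0"
    and "transversal_coeff (norm y) + (radial_coeff (norm y) - transversal_coeff (norm y)) \<noteq> 0"
    using transversal_coeff_pos[OF assms(2)] radial_coeff_pos[OF assms(2)] by auto
  ultimately show ?thesis
    unfolding Amat_def Bmat_eq[OF assms] by (simp add: matrix_inv_id_plus_proj)
qed

lemma Amat_mult_radial:
  fixes y :: "real^'n"
  assumes "CARD('n) = n" and "r0 \<le> norm y"
  shows "Amat F1 F2 g1 g2 c1 c2 S y *v y = (1 / radial_coeff (norm y)) *\<^sub>R y"
proof -
  have "y \<noteq> 0" using assms(2) r0_pos by auto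
  then show ?thesis
    unfolding Amat_eq[OF assms] matrix_vector_mult_add_rdistrib
      scaleR_matrix_vector_assoc[symmetric] matrix_vector_mul_lid proj_matrix_mult_self[OF \<open>y \<noteq> 0\<close>]
    by (simp add: algebra_simps)
qed

lemma trace_Amat_mult_nonpos:
  fixes y :: "real^'n" and H :: "real^'n^'n"
  assumes "CARD('n) = n" and "r0 \<le> norm y" and "\<forall>h. h \<bullet> (H *v h) \<le> 0"
  shows "trace (Amat F1 F2 g1 g2 c1 c2 S y ** H) \<le> 0"
  unfolding Amat_eq[OF assms(1,2)]
  using transversal_coeff_pos[OF assms(2)] radial_coeff_pos[OF assms(2)] assms(2,3) r0_pos
  by (intro trace_id_plus_proj_mult_nonpos) auto

lemma isCont_Amat:
  fixes x :: "real^'n"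
  assumes "CARD('n) = n" and "r0 < norm x"
  shows "isCont (Amat F1 F2 g1 g2 c1 c2 S) x"
proof -
  define U where "U = {y::real^'n. r0 < norm y}"
  have "open U" unfolding U_def by (intro open_Collect_less continuous_intros)
  have norm_U: "continuous_on U (\<lambda>y. f (norm y))" if "continuous_on {r0..} f" for f
    by (rule continuous_on_compose2[OF that]) (auto intro!: continuous_intros simp: U_def)
  have "continuous_on U (\<lambda>y. (1 / transversal_coeff (norm y)) *\<^sub>R mat 1
      + (1 / radial_coeff (norm y) - 1 / transversal_coeff (norm y)) *\<^sub>R proj_matrix y)"
    using norm_U[OF continuous_on_transversal_coeff] norm_U[OF continuous_on_radial_coeff]
      continuous_on_subset[OF continuous_on_proj_matrix, of U] transversal_coeff_pos radial_coeff_pos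
      r0_pos unfolding U_def
    by (intro continuous_intros) (auto simp: order_less_imp_le less_imp_neq[symmetric])
  then have cont: "isCont (\<lambda>y. (1 / transversal_coeff (norm y)) *\<^sub>R mat 1
      + (1 / radial_coeff (norm y) - 1 / transversal_coeff (norm y)) *\<^sub>R proj_matrix y) x"
    using \<open>open U\<close> assms(2) continuous_on_eq_continuous_at unfolding U_def by blast
  have "eventually (\<lambda>y. y \<in> U) (nhds x)"
    using \<open>open U\<close> assms(2) by (intro eventually_nhds_in_open) (auto simp: U_def)
  then have ev: "eventually (\<lambda>y. Amat F1 F2 g1 g2 c1 c2 S y = (1 / transversal_coeff (norm y)) *\<^sub>R mat 1
      + (1 / radial_coeff (norm y) - 1 / transversal_coeff (norm y)) *\<^sub>R proj_matrix y) (nhds x)"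
    by eventually_elim (simp add: U_def Amat_eq[OF assms(1)])
  show ?thesis using isCont_cong[OF ev] cont by simp
qed

lemma bvec_bounded:
  assumes "CARD('n) = n"
  obtains \<beta> where "\<forall>y::real^'n. r0 < norm y \<longrightarrow> norm (bvec F1 F2 g1 g2 c1 c2 S y) \<le> \<beta>"
proof -
  obtain D1 where D1: "\<forall>r\<ge>r0. \<bar>deriv F1 (S r)\<bar> \<le> D1" using F1_comp(3) by blast
  obtain D2 where D2: "\<forall>r\<ge>r0. \<bar>deriv F2 (S r)\<bar> \<le> D2" using F2_comp(3) by blast
  obtain B1 where B1: "\<forall>r\<ge>r0. \<bar>g1 (\<sigma> c1 r)\<bar> \<le> B1"
    using bounded_comp_ustar_speed[OF continuous_on_gfun[OF g1_adm]] by blast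
  obtain B2 where B2: "\<forall>r\<ge>r0. \<bar>g2 (\<sigma> c2 r)\<bar> \<le> B2"
    using bounded_comp_ustar_speed[OF continuous_on_gfun[OF g2_adm]] by blast
  have G: "norm (deriv F (S (norm y)) *\<^sub>R Gvec g (ustar c y)) \<le> D * (B * \<sigma> c r0)"
    if "r0 \<le> norm y" "\<forall>r\<ge>r0. \<bar>deriv F (S r)\<bar> \<le> D" "\<forall>r\<ge>r0. \<bar>g (\<sigma> c r)\<bar> \<le> B"
    for F g :: "real \<Rightarrow> real" and c D B and y :: "real^'n"
  proof -
    have D: "\<bar>deriv F (S (norm y))\<bar> \<le> D" and B: "\<bar>g (\<sigma> c (norm y))\<bar> \<le> B"
      using that by auto
    have "\<sigma> c (norm y) \<le> \<sigma> c r0" using ustar_speed_le n_pos r0_pos that(1) by simp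
    have gB: "\<bar>g (\<sigma> c (norm y))\<bar> * \<sigma> c (norm y) \<le> B * \<sigma> c r0"
      by (rule mult_mono) (use B \<open>\<sigma> c (norm y) \<le> \<sigma> c r0\<close> ustar_speed_nonneg in \<open>auto intro: order_trans[OF abs_ge_zero]\<close>)
    have "\<bar>deriv F (S (norm y))\<bar> * (\<bar>g (\<sigma> c (norm y))\<bar> * \<sigma> c (norm y)) \<le> D * (B * \<sigma> c r0)"
      by (rule mult_mono) (use D B gB ustar_speed_nonneg in \<open>auto intro: order_trans[OF abs_ge_zero]\<close>)
    then show ?thesis
      by (simp add: Gvec_def norm_ustar assms ustar_speed_nonneg abs_mult mult.assoc)
  qed
  show ?thesis
  proof (rule that[of "D2 * (B2 * \<sigma> c2 r0) + D1 * (B1 * \<sigma> c1 r0)"], intro allI impI)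
    fix y :: "real^'n" assume "r0 < norm y"
    then show "norm (bvec F1 F2 g1 g2 c1 c2 S y) \<le> D2 * (B2 * \<sigma> c2 r0) + D1 * (B1 * \<sigma> c1 r0)"
      unfolding bvec_def using G[OF _ D2 B2, of y] G[OF _ D1 B1, of y]
      by (smt (verit) norm_triangle_ineq4)
  qed
qed

lemma radial_coefficients:
  assumes "CARD('n) = n" and "0 < m_lo" "\<forall>r\<ge>r0. m_lo \<le> radial_coeff r \<and> radial_coeff r \<le> m_hi"
    and "\<forall>y::real^'n. r0 < norm y \<longrightarrow> norm (bvec F1 F2 g1 g2 c1 c2 S y) \<le> \<beta>"
  shows "radial_coefficients (Amat F1 F2 g1 g2 c1 c2 S :: real^'n \<Rightarrow> real^'n^'n) (bvec F1 F2 g1 g2 c1 c2 S)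
      radial_coeff m_lo m_hi \<beta> r0"
proof
  show "\<forall>r>r0. radial_coeff differentiable (at r)" using radial_coeff_differentiable by blast
  show "\<forall>y::real^'n. r0 < norm y \<longrightarrow> Amat F1 F2 g1 g2 c1 c2 S y *v y = (1 / radial_coeff (norm y)) *\<^sub>R y"
    using Amat_mult_radial[OF assms(1) order_less_imp_le] by blast
  show "\<forall>y::real^'n. r0 < norm y \<longrightarrow> isCont (Amat F1 F2 g1 g2 c1 c2 S) y"
    using isCont_Amat[OF assms(1)] by blast
  show "\<forall>(y::real^'n) H. r0 < norm y \<longrightarrow> (\<forall>h. h \<bullet> (H *v h) \<le> 0)
      \<longrightarrow> trace (Amat F1 F2 g1 g2 c1 c2 S y ** H) \<le> 0"
    using trace_Amat_mult_nonpos[OF assms(1) order_less_imp_le] by blast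
qed (use assms r0_pos continuous_on_radial_coeff in auto)

end

lemma continuous_differentiable_of_DERIV_atLeast:
  fixes f :: "real \<Rightarrow> real"
  assumes "\<forall>r\<ge>a. (f has_real_derivative f' r) (at r within {a..})"
  shows "continuous_on {a..} f" and "\<forall>r>a. f differentiable (at r)"
proof -
  show "continuous_on {a..} f"
    using assms DERIV_continuous continuous_on_eq_continuous_within by fastforce
  show "\<forall>r>a. f differentiable (at r)"
  proof (intro allI impI)
    fix r assume "a < r"
    then have "at r within {a..} = at r" by (intro at_within_interior) auto
    then have "(f has_real_derivative f' r) (at r)" using assms[rule_format, of r] \<open>a < r\<close> by simp
    then show "f differentiable (at r)" unfolding real_differentiable_def by blast
  qed
qed

theorem proposition5p7:
  fixes N1 N2 :: nat and a1 a2 \<alpha>1 \<alpha>2 :: "nat \<Rightarrow> real"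
    and f1 f2 pcd Shat :: "real \<Rightarrow> real"
    and r0 c1 c2 s0 sl su T :: real
    and w wt :: "real^'n \<Rightarrow> real \<Rightarrow> real"
    and Dw :: "real^'n \<Rightarrow> real \<Rightarrow> real^'n"
    and D2w :: "real^'n \<Rightarrow> real \<Rightarrow> real^'n^'n"
  defines "g1 \<equiv> gfun N1 a1 \<alpha>1" and "g2 \<equiv> gfun N2 a2 \<alpha>2"
    and "F1 \<equiv> Ffun pcd f1" and "F2 \<equiv> Ffun pcd f2"
    and "U \<equiv> {x::real^'n. r0 < norm x}"
  assumes dim: "CARD('n) \<ge> 2"
    and g1_adm: "g_admissible N1 a1 \<alpha>1" and g2_adm: "g_admissible N2 a2 \<alpha>2"
    and f1_cont: "continuous_on {0..1} f1" and f1_C1: "f1 C1_differentiable_on {0<..<1}"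
    and f2_cont: "continuous_on {0..1} f2" and f2_C1: "f2 C1_differentiable_on {0<..<1}"
    and f1_0: "f1 0 = 0" and f2_1: "f2 1 = 0"
    and f1_mono: "\<forall>s\<in>{0<..<1}. deriv f1 s > 0"
    and f2_mono: "\<forall>s\<in>{0<..<1}. deriv f2 s < 0"
    and pcd_C1: "pcd C1_differentiable_on {0<..<1}"
    and pcd_pos: "\<forall>s\<in>{0<..<1}. pcd s > 0"
    and r0_pos: "r0 > 0"
    and c_nz: "c1\<^sup>2 + c2\<^sup>2 > 0"
    and s0: "0 < s0" "s0 < 1"
    and Shat_ode: "\<forall>r\<ge>r0. (Shat has_real_derivative
        (Gsc g2 (c2 * r powr (1 - real CARD('n))) * F2 (Shat r)
         - Gsc g1 (c1 * r powr (1 - real CARD('n))) * F1 (Shat r))) (at r within {r0..})"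
    and Shat_init: "Shat r0 = s0"
    and Shat_bounds: "0 < sl" "su < 1" "\<forall>r\<ge>r0. sl \<le> Shat r \<and> Shat r \<le> su"
    and T_pos: "T > 0"
    and w_cont: "continuous_on ({x. r0 \<le> norm x} \<times> {0..T}) (\<lambda>(x, t). w x t)"
    and w_bdd: "\<exists>M. \<forall>x t. r0 \<le> norm x \<and> 0 \<le> t \<and> t \<le> T \<longrightarrow> \<bar>w x t\<bar> \<le> M"
    and w_t: "\<forall>x\<in>U. \<forall>t\<in>{0<..T}. ((\<lambda>s. w x s) has_real_derivative wt x t) (at t within {0<..T})"
    and w_x: "\<forall>x\<in>U. \<forall>t\<in>{0<..T}. ((\<lambda>y. w y t) has_derivative (\<lambda>h. Dw x t \<bullet> h)) (at x)"
    and w_xx: "\<forall>x\<in>U. \<forall>t\<in>{0<..T}. ((\<lambda>y. Dw y t) has_derivative (\<lambda>h. D2w x t *v h)) (at x)"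
    and wt_cont: "continuous_on (U \<times> {0<..T}) (\<lambda>(x, t). wt x t)"
    and Dw_cont: "continuous_on (U \<times> {0<..T}) (\<lambda>(x, t). Dw x t)"
    and D2w_cont: "continuous_on (U \<times> {0<..T}) (\<lambda>(x, t). D2w x t)"
    and w_init: "\<forall>x\<in>U. w x 0 \<le> 0"
    and Lw: "\<forall>x\<in>U. \<forall>t\<in>{0<..T}.
       Lop (Amat F1 F2 g1 g2 c1 c2 Shat) (bvec F1 F2 g1 g2 c1 c2 Shat) wt Dw x t \<le> 0"
  shows "Limsup at_top (\<lambda>r. ereal (Sup {w x t | x t. norm x = r \<and> 0 \<le> t \<and> t \<le> T})) \<le> 0"
proof -
  note defs = assms(1-5)
  interpret coef: two_phase_outer N1 N2 a1 a2 \<alpha>1 \<alpha>2 f1 f2 pcd Shat r0 c1 c2 sl su "CARD('n)"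
    using assms continuous_differentiable_of_DERIV_atLeast[OF Shat_ode] by unfold_locales auto
  obtain m_lo m_hi where "0 < m_lo" "\<forall>r\<ge>r0. m_lo \<le> coef.radial_coeff r \<and> coef.radial_coeff r \<le> m_hi"
    by (rule coef.radial_coeff_bounds)
  moreover obtain \<beta> where "\<forall>y::real^'n. r0 < norm y \<longrightarrow> norm (bvec F1 F2 g1 g2 c1 c2 Shat y) \<le> \<beta>"
    unfolding defs by (rule coef.bvec_bounded) simp
  ultimately interpret outer_subsolution "Amat F1 F2 g1 g2 c1 c2 Shat" "bvec F1 F2 g1 g2 c1 c2 Shat"
    coef.radial_coeff m_lo m_hi \<beta> r0 T w wt Dw D2w
    unfolding defs
    by (intro outer_subsolution.intro coef.radial_coefficients outer_subsolution_axioms.intro)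
      (use assms in \<open>simp_all add: defs\<close>)
  show ?thesis by (rule Limsup_sphere_Sup_nonpos)
qed

end
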